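(* If $\mathcal{A}$ is a strong $T_0$-family, then every nonseparable closed linear subspace of $\mathcal{X}_\mathcal{A}$ contains a subspace isomorphic to $\ell_2$.
   Context: $c_{00}(\omega_1)$ is the set of finitely supported $x\in\mathbb{R}^{\omega_1}$; $\|x\|_\mathcal{A}=\sup_{A\in\mathcal{A}}\sqrt{\sum_{\alpha\in A}x(\alpha)^2}$ and $\mathcal{X}_\mathcal{A}$ is the closure of $c_{00}(\omega_1)$ in $\{x\in\mathbb{R}^{\omega_1}:\|x\|_\mathcal{A}<\infty\}$. For disjoint $A,B$, $A\otimes B=\{\{\alpha,\beta\}:\alpha\in A,\beta\in B\}$. A function $c=(c_0,c_1):[\omega_1]^2\to I\times J$ ($0,1\in I$, $J\ne\emptyset$) is a $T$-coloring if for every uncountable pairwise disjoint family $\{\{a_\xi(0),a_\xi(1)\}:\xi<\omega_1\}$ of pairs and all $(i_0,j_0),(i_1,j_1)\in I\times J$ there are $\xi<\eta$ with $c(\{a_\xi(0),a_\eta(0)\})=(i_0,j_0)$, $c(\{a_\xi(1),a_\eta(1)\})=(i_1,j_1)$; it is a strong $T$-coloring if moreover for every uncountable pairwise disjoint family $\{A_\xi:\xi<\omega_1\}$ of finite subsets of $\omega_1$ there are $\xi<\eta$ with $c_0[A_\xi\otimes A_\eta]=\{0\}$ and $\xi<\eta$ with $c_0[A_\xi\otimes A_\eta]=\{1\}$. A strong $T_0$-family is $\mathcal{A}_c=\{a\subseteq\omega_1\text{ finite}:c_0[[a]^2]\subseteq\{0\}\}$ for a strong $T$-coloring $c$. *)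

theory Defs
  imports Complex_Main "HOL-Library.Countable_Set"
begin

text \<open>omega_1 is modelled by a well-ordered type 'a that is uncountable and all of
whose proper initial segments are countable (i.e. its order type is omega_1).
Unordered pairs {alpha,beta} are represented as two-element sets.\<close>

definition is_omega1 :: "'a::wellorder itself \<Rightarrow> bool" where
  "is_omega1 _ \<longleftrightarrow> \<not> countable (UNIV :: 'a set) \<and> (\<forall>\<alpha>::'a. countable {..<\<alpha>})"

definition pairs2 :: "'a set \<Rightarrow> 'a set set" where
  "pairs2 a = {{\<alpha>, \<beta>} | \<alpha> \<beta>. \<alpha> \<in> a \<and> \<beta> \<in> a \<and> \<alpha> \<noteq> \<beta>}"

definition otimes :: "'a set \<Rightarrow> 'a set \<Rightarrow> 'a set set" where
  "otimes A B = {{\<alpha>, \<beta>} | \<alpha> \<beta>. \<alpha> \<in> A \<and> \<beta> \<in> B}"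

text \<open>T-coloring c = (c0, c1) : [omega_1]^2 \<rightarrow> I \<times> J, with c0 = fst \<circ> c.\<close>
definition T_coloring :: "('a::wellorder set \<Rightarrow> 'i::zero_neq_one \<times> 'j) \<Rightarrow> 'i set \<Rightarrow> 'j set \<Rightarrow> bool" where
  "T_coloring c I J \<longleftrightarrow>
     0 \<in> I \<and> 1 \<in> I \<and> J \<noteq> {} \<and>
     (\<forall>p \<in> pairs2 (UNIV :: 'a set). c p \<in> I \<times> J) \<and>
     (\<forall>a0 a1 :: 'a \<Rightarrow> 'a.
        (\<forall>\<xi>. a0 \<xi> \<noteq> a1 \<xi>) \<and>
        (\<forall>\<xi> \<eta>. \<xi> \<noteq> \<eta> \<longrightarrow> {a0 \<xi>, a1 \<xi>} \<inter> {a0 \<eta>, a1 \<eta>} = {}) \<longrightarrow>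
        (\<forall>i0 \<in> I. \<forall>j0 \<in> J. \<forall>i1 \<in> I. \<forall>j1 \<in> J.
           \<exists>\<xi> \<eta>. \<xi> < \<eta> \<and> c {a0 \<xi>, a0 \<eta>} = (i0, j0) \<and> c {a1 \<xi>, a1 \<eta>} = (i1, j1)))"

definition strong_T_coloring :: "('a::wellorder set \<Rightarrow> 'i::zero_neq_one \<times> 'j) \<Rightarrow> 'i set \<Rightarrow> 'j set \<Rightarrow> bool" where
  "strong_T_coloring c I J \<longleftrightarrow>
     T_coloring c I J \<and>
     (\<forall>A :: 'a \<Rightarrow> 'a set.
        (\<forall>\<xi>. finite (A \<xi>) \<and> A \<xi> \<noteq> {}) \<and>
        (\<forall>\<xi> \<eta>. \<xi> \<noteq> \<eta> \<longrightarrow> A \<xi> \<inter> A \<eta> = {}) \<longrightarrow>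
        (\<exists>\<xi> \<eta>. \<xi> < \<eta> \<and> (fst \<circ> c) ` otimes (A \<xi>) (A \<eta>) = {0}) \<and>
        (\<exists>\<xi> \<eta>. \<xi> < \<eta> \<and> (fst \<circ> c) ` otimes (A \<xi>) (A \<eta>) = {1}))"

definition T0_family :: "('a set \<Rightarrow> 'i::zero_neq_one \<times> 'j) \<Rightarrow> 'a set set" where
  "T0_family c = {a. finite a \<and> (fst \<circ> c) ` pairs2 a \<subseteq> {0}}"

definition normA :: "'a set set \<Rightarrow> ('a \<Rightarrow> real) \<Rightarrow> real" where
  "normA \<A> x = (SUP a \<in> \<A>. sqrt (\<Sum>\<alpha>\<in>a. (x \<alpha>)^2))"

definition normA_finite :: "'a set set \<Rightarrow> ('a \<Rightarrow> real) \<Rightarrow> bool" where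
  "normA_finite \<A> x \<longleftrightarrow> bdd_above ((\<lambda>a. sqrt (\<Sum>\<alpha>\<in>a. (x \<alpha>)^2)) ` \<A>)"

definition c00 :: "('a \<Rightarrow> real) set" where
  "c00 = {x. finite {\<alpha>. x \<alpha> \<noteq> 0}}"

definition XA :: "'a set set \<Rightarrow> ('a \<Rightarrow> real) set" where
  "XA \<A> = {x. normA_finite \<A> x \<and>
              (\<forall>e>0. \<exists>y \<in> c00. normA \<A> (\<lambda>\<alpha>. x \<alpha> - y \<alpha>) < e)}"

definition closed_subspace_XA :: "'a set set \<Rightarrow> ('a \<Rightarrow> real) set \<Rightarrow> bool" where
  "closed_subspace_XA \<A> Z \<longleftrightarrow>
     Z \<subseteq> XA \<A> \<and> (\<lambda>\<alpha>. 0) \<in> Z \<and>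
     (\<forall>x\<in>Z. \<forall>y\<in>Z. (\<lambda>\<alpha>. x \<alpha> + y \<alpha>) \<in> Z) \<and>
     (\<forall>r::real. \<forall>x\<in>Z. (\<lambda>\<alpha>. r * x \<alpha>) \<in> Z) \<and>
     (\<forall>x \<in> XA \<A>. (\<forall>e>0. \<exists>z\<in>Z. normA \<A> (\<lambda>\<alpha>. x \<alpha> - z \<alpha>) < e) \<longrightarrow> x \<in> Z)"

definition separable_XA :: "'a set set \<Rightarrow> ('a \<Rightarrow> real) set \<Rightarrow> bool" where
  "separable_XA \<A> Z \<longleftrightarrow>
     (\<exists>D \<subseteq> Z. countable D \<and> (\<forall>z\<in>Z. \<forall>e>0. \<exists>d\<in>D. normA \<A> (\<lambda>\<alpha>. z \<alpha> - d \<alpha>) < e))"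

definition l2 :: "(nat \<Rightarrow> real) set" where
  "l2 = {f. summable (\<lambda>n. (f n)^2)}"

definition l2_norm :: "(nat \<Rightarrow> real) \<Rightarrow> real" where
  "l2_norm f = sqrt (\<Sum>n. (f n)^2)"

definition contains_l2 :: "'a set set \<Rightarrow> ('a \<Rightarrow> real) set \<Rightarrow> bool" where
  "contains_l2 \<A> Z \<longleftrightarrow>
     (\<exists>(T :: (nat \<Rightarrow> real) \<Rightarrow> ('a \<Rightarrow> real)) m M.
        0 < m \<and> 0 < M \<and> T ` l2 \<subseteq> Z \<and>
        (\<forall>f\<in>l2. \<forall>g\<in>l2. T (\<lambda>n. f n + g n) = (\<lambda>\<alpha>. T f \<alpha> + T g \<alpha>)) \<and>
        (\<forall>r::real. \<forall>f\<in>l2. T (\<lambda>n. r * f n) = (\<lambda>\<alpha>. r * T f \<alpha>)) \<and>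
        (\<forall>f\<in>l2. m * l2_norm f \<le> normA \<A> (T f) \<and> normA \<A> (T f) \<le> M * l2_norm f))"

end

theory Submission
  imports Defs "HOL-Analysis.L2_Norm" "HOL-Analysis.Convex"
begin

text \<open>
  Restricting to a countable set S of coordinates maps X_A into a separable space, so on a
  nonseparable closed subspace Z this restriction is not bounded below: for every \<open>\<delta> > 0\<close>
  there is a unit vector of Z whose restriction to S has norm at most \<open>\<delta>\<close>, and it carries mass
  at least 1/4 on a member of A disjoint from S. A recursion of length \<open>\<omega>\<^sub>1\<close> produces
  such vectors \<open>z \<xi> k\<close> with tolerance \<open>1 / (8 * 2^k)\<close>, where the set avoided at stage \<open>\<xi>\<close> is
  the union of the supports of all earlier vectors; hence their heavy blocks are pairwise disjoint.
  The 0-homogeneity half of the strong T-coloring property then selects \<open>\<xi>\<^sub>0 < \<xi>\<^sub>1 < \<dots>\<close>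
  such that, for \<open>z\<^sub>n = z \<xi>\<^sub>n n\<close>, the union of the first N blocks lies in A for every N.
  Finally \<open>f \<mapsto> \<Sum>n. f n * z\<^sub>n\<close> embeds \<open>l\<^sub>2\<close> isomorphically into Z: the parts of the
  \<open>z\<^sub>n\<close> outside the avoided sets have pairwise disjoint supports, which gives the upper bound
  and, on the unions of blocks, the lower bound, while the remaining parts are so small that the
  squares of their norms sum to at most 1/48.
\<close>

section \<open>The norm of X_A\<close>

lemma normA_eq_SUP_L2_set: "normA \<A> x = (SUP a \<in> \<A>. L2_set x a)"
  unfolding normA_def L2_set_def ..

lemma normA_finite_iff_bdd_L2_set: "normA_finite \<A> x \<longleftrightarrow> bdd_above ((\<lambda>a. L2_set x a) ` \<A>)"
  unfolding normA_finite_def L2_set_def ..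

lemma normA_finiteI:
  assumes "\<And>a. a \<in> \<A> \<Longrightarrow> L2_set x a \<le> B"
  shows "normA_finite \<A> x"
  unfolding normA_finite_iff_bdd_L2_set bdd_above_def using assms by blast

lemma normA_le:
  assumes "\<A> \<noteq> {}" "\<And>a. a \<in> \<A> \<Longrightarrow> L2_set x a \<le> B"
  shows "normA \<A> x \<le> B"
  unfolding normA_eq_SUP_L2_set using assms by (intro cSUP_least) auto

lemma L2_set_le_normA:
  assumes "normA_finite \<A> x" "a \<in> \<A>"
  shows "L2_set x a \<le> normA \<A> x"
  using assms unfolding normA_eq_SUP_L2_set normA_finite_iff_bdd_L2_set by (intro cSUP_upper)

lemma sum_squares_le_normA_squared:
  assumes "normA_finite \<A> x" "a \<in> \<A>"
  shows "(\<Sum>\<alpha>\<in>a. (x \<alpha>)\<^sup>2) \<le> (normA \<A> x)\<^sup>2"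
proof -
  have "(\<Sum>\<alpha>\<in>a. (x \<alpha>)\<^sup>2) = (L2_set x a)\<^sup>2"
    unfolding L2_set_def by (simp add: sum_nonneg)
  also have "\<dots> \<le> (normA \<A> x)\<^sup>2"
    using L2_set_le_normA[OF assms] by (intro power_mono) auto
  finally show ?thesis .
qed

lemma normA_nonneg:
  assumes "normA_finite \<A> x" "\<A> \<noteq> {}"
  shows "0 \<le> normA \<A> x"
  using assms L2_set_le_normA[OF assms(1)] L2_set_nonneg order_trans by blast

lemma
  assumes "\<A> \<noteq> {}" "normA_finite \<A> x" "normA_finite \<A> y"
  shows normA_add_le: "normA \<A> (\<lambda>\<alpha>. x \<alpha> + y \<alpha>) \<le> normA \<A> x + normA \<A> y"
    and normA_finite_add: "normA_finite \<A> (\<lambda>\<alpha>. x \<alpha> + y \<alpha>)"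
proof -
  have "L2_set (\<lambda>\<alpha>. x \<alpha> + y \<alpha>) a \<le> normA \<A> x + normA \<A> y" if "a \<in> \<A>" for a
    using L2_set_triangle_ineq[of x y a] L2_set_le_normA[OF assms(2) that]
      L2_set_le_normA[OF assms(3) that] by linarith
  then show "normA \<A> (\<lambda>\<alpha>. x \<alpha> + y \<alpha>) \<le> normA \<A> x + normA \<A> y"
    and "normA_finite \<A> (\<lambda>\<alpha>. x \<alpha> + y \<alpha>)"
    using assms(1) by (auto intro: normA_le normA_finiteI)
qed

lemma L2_set_scale: "L2_set (\<lambda>\<alpha>. r * x \<alpha>) a = \<bar>r\<bar> * L2_set x a"
  unfolding L2_set_def by (simp add: power_mult_distrib real_sqrt_mult flip: sum_distrib_left)

lemma
  assumes "\<A> \<noteq> {}" "normA_finite \<A> x"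
  shows normA_scale_le: "normA \<A> (\<lambda>\<alpha>. r * x \<alpha>) \<le> \<bar>r\<bar> * normA \<A> x"
    and normA_finite_scale: "normA_finite \<A> (\<lambda>\<alpha>. r * x \<alpha>)"
proof -
  have "L2_set (\<lambda>\<alpha>. r * x \<alpha>) a \<le> \<bar>r\<bar> * normA \<A> x" if "a \<in> \<A>" for a
    using L2_set_le_normA[OF assms(2) that] by (simp add: L2_set_scale mult_left_mono)
  then show "normA \<A> (\<lambda>\<alpha>. r * x \<alpha>) \<le> \<bar>r\<bar> * normA \<A> x"
    and "normA_finite \<A> (\<lambda>\<alpha>. r * x \<alpha>)"
    using assms(1) by (auto intro: normA_le normA_finiteI)
qed

lemma normA_scale:
  assumes "\<A> \<noteq> {}" "normA_finite \<A> x"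
  shows "normA \<A> (\<lambda>\<alpha>. r * x \<alpha>) = \<bar>r\<bar> * normA \<A> x"
proof (cases "r = 0")
  case True
  then show ?thesis
    using normA_scale_le[OF assms, of 0] normA_nonneg[OF normA_finite_scale[OF assms, of 0] assms(1)]
    by simp
next
  case False
  have "normA \<A> x = normA \<A> (\<lambda>\<alpha>. (1 / r) * (r * x \<alpha>))"
    using False by simp
  also have "\<dots> \<le> \<bar>1 / r\<bar> * normA \<A> (\<lambda>\<alpha>. r * x \<alpha>)"
    by (rule normA_scale_le[OF assms(1) normA_finite_scale[OF assms]])
  finally have "\<bar>r\<bar> * normA \<A> x \<le> normA \<A> (\<lambda>\<alpha>. r * x \<alpha>)"
    using False by (simp add: field_simps)
  then show ?thesis
    using normA_scale_le[OF assms, of r] by simp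
qed

lemma
  assumes "\<A> \<noteq> {}" "normA_finite \<A> x" "normA_finite \<A> y"
  shows normA_diff_le: "normA \<A> (\<lambda>\<alpha>. x \<alpha> - y \<alpha>) \<le> normA \<A> x + normA \<A> y"
    and normA_finite_diff: "normA_finite \<A> (\<lambda>\<alpha>. x \<alpha> - y \<alpha>)"
  using normA_add_le[OF assms(1,2) normA_finite_scale[OF assms(1,3)], of "-1"]
    normA_finite_add[OF assms(1,2) normA_finite_scale[OF assms(1,3)], of "-1"]
    normA_scale[OF assms(1,3), of "-1"]
  by simp_all

lemma L2_set_le_sum_abs_support:
  assumes "finite F" "{\<alpha>. u \<alpha> \<noteq> 0} \<subseteq> F"
  shows "L2_set u a \<le> (\<Sum>\<alpha>\<in>F. \<bar>u \<alpha>\<bar>)"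
proof (cases "finite a")
  case True
  have "L2_set u a = L2_set u (a \<inter> F)"
    unfolding L2_set_def using True assms(2)
    by (intro arg_cong[where f = sqrt] sum.mono_neutral_right) auto
  also have "\<dots> \<le> (\<Sum>\<alpha>\<in>a \<inter> F. \<bar>u \<alpha>\<bar>)"
    by (rule L2_set_le_sum_abs)
  also have "\<dots> \<le> (\<Sum>\<alpha>\<in>F. \<bar>u \<alpha>\<bar>)"
    using assms(1) by (intro sum_mono2) auto
  finally show ?thesis .
qed (simp add: sum_nonneg)

lemma normA_finite_c00: "y \<in> c00 \<Longrightarrow> normA_finite \<A> y"
  unfolding c00_def by (auto intro: normA_finiteI L2_set_le_sum_abs_support)

lemma normA_finite_XA: "x \<in> XA \<A> \<Longrightarrow> normA_finite \<A> x"
  unfolding XA_def by auto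

lemma XA_approx_c00: "x \<in> XA \<A> \<Longrightarrow> e > 0 \<Longrightarrow> \<exists>y\<in>c00. normA \<A> (\<lambda>\<alpha>. x \<alpha> - y \<alpha>) < e"
  unfolding XA_def by auto

lemma closed_subspace_XA_subset: "closed_subspace_XA \<A> Z \<Longrightarrow> Z \<subseteq> XA \<A>"
  unfolding closed_subspace_XA_def by auto

lemma closed_subspace_XA_add:
  "closed_subspace_XA \<A> Z \<Longrightarrow> x \<in> Z \<Longrightarrow> y \<in> Z \<Longrightarrow> (\<lambda>\<alpha>. x \<alpha> + y \<alpha>) \<in> Z"
  unfolding closed_subspace_XA_def by auto

lemma closed_subspace_XA_scale: "closed_subspace_XA \<A> Z \<Longrightarrow> x \<in> Z \<Longrightarrow> (\<lambda>\<alpha>. r * x \<alpha>) \<in> Z"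
  unfolding closed_subspace_XA_def by auto

lemma closed_subspace_XA_diff:
  "closed_subspace_XA \<A> Z \<Longrightarrow> x \<in> Z \<Longrightarrow> y \<in> Z \<Longrightarrow> (\<lambda>\<alpha>. x \<alpha> - y \<alpha>) \<in> Z"
  using closed_subspace_XA_add[of \<A> Z x "\<lambda>\<alpha>. (-1) * y \<alpha>"] closed_subspace_XA_scale[of \<A> Z y "-1"]
  by simp

lemma closed_subspace_XA_partial_sum:
  assumes "closed_subspace_XA \<A> Z" "\<And>n. z n \<in> Z"
  shows "(\<lambda>\<alpha>. \<Sum>n<(N::nat). f n * z n \<alpha>) \<in> Z"
proof (induction N)
  case 0
  then show ?case using assms(1) unfolding closed_subspace_XA_def by simp
next
  case (Suc N)
  then show ?case
    using closed_subspace_XA_add[OF assms(1) Suc closed_subspace_XA_scale[OF assms]] by simp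
qed

lemma closed_subspace_XA_approx_mem:
  assumes Z: "closed_subspace_XA \<A> Z" and "\<A> \<noteq> {}" "normA_finite \<A> x"
    and approx: "\<And>e. e > 0 \<Longrightarrow> \<exists>z\<in>Z. normA \<A> (\<lambda>\<alpha>. x \<alpha> - z \<alpha>) < e"
  shows "x \<in> Z"
proof -
  have "\<exists>y\<in>c00. normA \<A> (\<lambda>\<alpha>. x \<alpha> - y \<alpha>) < e" if "e > 0" for e
  proof -
    obtain z where z: "z \<in> Z" "normA \<A> (\<lambda>\<alpha>. x \<alpha> - z \<alpha>) < e / 2"
      using approx[of "e / 2"] \<open>e > 0\<close> by auto
    have zX: "z \<in> XA \<A>" using z(1) closed_subspace_XA_subset[OF Z] by auto
    obtain y where y: "y \<in> c00" "normA \<A> (\<lambda>\<alpha>. z \<alpha> - y \<alpha>) < e / 2"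
      using XA_approx_c00[OF zX, of "e / 2"] \<open>e > 0\<close> by auto
    have "normA \<A> (\<lambda>\<alpha>. (x \<alpha> - z \<alpha>) + (z \<alpha> - y \<alpha>))
        \<le> normA \<A> (\<lambda>\<alpha>. x \<alpha> - z \<alpha>) + normA \<A> (\<lambda>\<alpha>. z \<alpha> - y \<alpha>)"
      using assms(2,3) normA_finite_XA[OF zX] normA_finite_c00[OF y(1)]
      by (intro normA_add_le normA_finite_diff)
    then show ?thesis using z(2) y by (intro bexI[of _ y]) auto
  qed
  then have "x \<in> XA \<A>" unfolding XA_def using assms(3) by blast
  then show ?thesis using Z approx unfolding closed_subspace_XA_def by blast
qed

section \<open>Countability and transfinite choice\<close>

lemma transfinite_fresh_choice:
  fixes used :: "'c \<Rightarrow> 'b set"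
  assumes initial: "\<And>\<xi>::'a::wellorder. countable {..<\<xi>}"
    and choose: "\<And>S. countable S \<Longrightarrow> \<exists>x. P S x \<and> countable (used x)"
  shows "\<exists>x::'a \<Rightarrow> 'c. \<forall>\<xi>. P (\<Union>\<eta>\<in>{..<\<xi>}. used (x \<eta>)) (x \<xi>)"
proof -
  define R :: "('a \<times> 'a) set" where "R = {(\<eta>, \<xi>). \<eta> < \<xi>}"
  define H where "H = (\<lambda>g (\<xi>::'a). SOME y. P (\<Union>\<eta>\<in>{..<\<xi>}. used (g \<eta>)) y \<and> countable (used y))"
  define x where "x = wfrec R H"
  have x_eq: "x \<xi> = (SOME y. P (\<Union>\<eta>\<in>{..<\<xi>}. used (x \<eta>)) y \<and> countable (used y))" for \<xi>
  proof -
    have "x \<xi> = H (cut x R \<xi>) \<xi>"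
      unfolding x_def by (rule wfrec) (simp add: R_def wf)
    also have "(\<Union>\<eta>\<in>{..<\<xi>}. used (cut x R \<xi> \<eta>)) = (\<Union>\<eta>\<in>{..<\<xi>}. used (x \<eta>))"
      by (intro SUP_cong refl) (simp add: cut_apply R_def)
    then have "H (cut x R \<xi>) \<xi> = H x \<xi>"
      unfolding H_def by simp
    finally show ?thesis
      unfolding H_def .
  qed
  have "P (\<Union>\<eta>\<in>{..<\<xi>}. used (x \<eta>)) (x \<xi>) \<and> countable (used (x \<xi>))" for \<xi>
  proof (induction \<xi> rule: less_induct)
    case (less \<xi>)
    then have "countable (\<Union>\<eta>\<in>{..<\<xi>}. used (x \<eta>))"
      using initial by (intro countable_UN) auto
    from choose[OF this] show ?case
      unfolding x_eq[of \<xi>] by (rule someI_ex)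
  qed
  then show ?thesis by blast
qed

lemma omega1_countable_initial: "is_omega1 TYPE('a::wellorder) \<Longrightarrow> countable {..<\<xi>::'a}"
  unfolding is_omega1_def by blast

lemma omega1_uncountable_above:
  assumes "is_omega1 TYPE('a::wellorder)" "uncountable (U :: 'a set)"
  shows "uncountable {\<xi> \<in> U. \<beta> < \<xi>}"
proof -
  have "{..\<beta>} = insert \<beta> {..<\<beta>}"
    by auto
  then have "countable {..\<beta>}"
    using omega1_countable_initial[OF assms(1), of \<beta>] by simp
  moreover have "{\<xi> \<in> U. \<beta> < \<xi>} = U - {..\<beta>}"
    by auto
  ultimately show ?thesis
    using uncountable_minus_countable[OF assms(2)] by simp
qed

lemma countable_witnesses:
  assumes "countable P"
  shows "\<exists>D. countable D \<and> D \<subseteq> {z. \<exists>p\<in>P. R p z} \<and> (\<forall>p\<in>P. \<forall>z. R p z \<longrightarrow> (\<exists>z'\<in>D. R p z'))"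
proof (intro exI conjI ballI allI impI)
  let ?D = "(\<lambda>p. SOME z. R p z) ` {p \<in> P. \<exists>z. R p z}"
  show "countable ?D"
    using assms by auto
  show "?D \<subseteq> {z. \<exists>p\<in>P. R p z}"
    by (auto intro: someI)
  show "\<exists>z'\<in>?D. R p z'" if "p \<in> P" "R p z" for p z
    using that by (auto intro: someI)
qed

lemma uncountable_UN_countable:
  assumes "uncountable A" "A \<subseteq> (\<Union>i\<in>I. B i)" "countable I"
  shows "\<exists>i\<in>I. uncountable (B i)"
proof (rule ccontr)
  assume "\<not> ?thesis"
  then have "countable (\<Union>i\<in>I. B i)"
    using assms(3) by (intro countable_UN) auto
  then show False
    using assms(1,2) countable_subset by blast
qed

lemma transfinite_fresh_pairs:
  fixes X Y :: "'a set" and C :: "'a \<Rightarrow> 'a set"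
  assumes initial: "\<And>\<xi>::'b::wellorder. countable {..<\<xi>}"
    and "uncountable X" "uncountable Y" and C: "\<And>\<xi>. \<xi> \<in> X \<Longrightarrow> countable (C \<xi>)"
  shows "\<exists>(x :: 'b \<Rightarrow> 'a) y. (\<forall>\<alpha>. x \<alpha> \<in> X \<and> y \<alpha> \<in> Y) \<and>
           (\<forall>\<alpha> \<gamma>. \<alpha> < \<gamma> \<longrightarrow> {x \<gamma>, y \<gamma>} \<inter> ({x \<alpha>, y \<alpha>} \<union> C (x \<alpha>)) = {})"
proof -
  let ?fresh = "\<lambda>S p. fst p \<in> X - S \<and> snd p \<in> Y - S"
  let ?used = "\<lambda>p. {fst p, snd p} \<union> C (fst p)"
  have choose: "\<exists>p. ?fresh S p \<and> countable (?used p)" if S: "countable S" for S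
  proof -
    obtain u where "u \<in> X - S"
      using uncountable_minus_countable[OF assms(2) S] by (metis countable_empty ex_in_conv)
    moreover obtain v where "v \<in> Y - S"
      using uncountable_minus_countable[OF assms(3) S] by (metis countable_empty ex_in_conv)
    ultimately show ?thesis
      using C by (intro exI[of _ "(u, v)"]) auto
  qed
  obtain p :: "'b \<Rightarrow> 'a \<times> 'a" where p: "\<forall>\<xi>. ?fresh (\<Union>\<eta>\<in>{..<\<xi>}. ?used (p \<eta>)) (p \<xi>)"
    using transfinite_fresh_choice[where P = ?fresh and used = ?used, OF initial choose] by blast
  have "\<forall>\<alpha>. fst (p \<alpha>) \<in> X \<and> snd (p \<alpha>) \<in> Y"
    using p by blast
  moreover have "\<forall>\<alpha> \<gamma>. \<alpha> < \<gamma> \<longrightarrow>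
      {fst (p \<gamma>), snd (p \<gamma>)} \<inter> ({fst (p \<alpha>), snd (p \<alpha>)} \<union> C (fst (p \<alpha>))) = {}"
    using p by blast
  ultimately show ?thesis
    by (intro exI[of _ "\<lambda>\<alpha>. fst (p \<alpha>)"] exI[of _ "\<lambda>\<alpha>. snd (p \<alpha>)"]) simp
qed

section \<open>Restrictions and escaping blocks\<close>

definition proj_on :: "'a set \<Rightarrow> ('a \<Rightarrow> real) \<Rightarrow> 'a \<Rightarrow> real" where
  "proj_on S x = (\<lambda>\<alpha>. if \<alpha> \<in> S then x \<alpha> else 0)"

lemma L2_set_proj_on: "finite a \<Longrightarrow> L2_set (proj_on S x) a = L2_set x (a \<inter> S)"
  by (simp add: L2_set_def proj_on_def sum.inter_restrict if_distrib[of "\<lambda>t. t\<^sup>2"] cong: if_cong)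

lemma exists_rational_approx:
  fixes y :: "'a \<Rightarrow> real"
  assumes "\<eta> > 0"
  shows "\<exists>q. \<forall>\<alpha>. q \<alpha> \<in> \<rat> \<and> \<bar>y \<alpha> - q \<alpha>\<bar> < \<eta>"
proof -
  have "\<exists>r. r \<in> \<rat> \<and> \<bar>y \<alpha> - r\<bar> < \<eta>" for \<alpha>
  proof -
    obtain r where "r \<in> \<rat>" "y \<alpha> - \<eta> < r" "r < y \<alpha> + \<eta>"
      using Rats_dense_in_real[of "y \<alpha> - \<eta>" "y \<alpha> + \<eta>"] assms by auto
    then show ?thesis by (intro exI[of _ r]) auto
  qed
  then show ?thesis
    by (rule choice[OF allI])
qed

definition rational_c00_on :: "'a set \<Rightarrow> ('a \<Rightarrow> real) set" where
  "rational_c00_on S = {d \<in> c00. {\<alpha>. d \<alpha> \<noteq> 0} \<subseteq> S \<and> (\<forall>\<alpha>. d \<alpha> \<in> \<rat>)}"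

lemma countable_rational_c00_on:
  assumes "countable S"
  shows "countable (rational_c00_on S)"
proof (rule countable_subset)
  let ?fun_of = "\<lambda>xs \<alpha>. case map_of xs \<alpha> of None \<Rightarrow> 0 | Some r \<Rightarrow> r"
  show "rational_c00_on S \<subseteq> ?fun_of ` lists (S \<times> \<rat>)"
    unfolding rational_c00_on_def
  proof safe
    fix d :: "'a \<Rightarrow> real"
    assume d: "d \<in> c00" "{\<alpha>. d \<alpha> \<noteq> 0} \<subseteq> S" "\<forall>\<alpha>. d \<alpha> \<in> \<rat>"
    obtain ks where ks: "set ks = {\<alpha>. d \<alpha> \<noteq> 0}"
      using d(1) finite_list unfolding c00_def by blast
    have "d = ?fun_of (map (\<lambda>k. (k, d k)) ks)"
      by (auto simp: map_of_map_restrict ks restrict_map_def)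
    moreover have "map (\<lambda>k. (k, d k)) ks \<in> lists (S \<times> \<rat>)"
      using d(2,3) ks by auto
    ultimately show "d \<in> ?fun_of ` lists (S \<times> \<rat>)" by blast
  qed
  show "countable (?fun_of ` lists (S \<times> \<rat>))"
    using assms countable_rat by auto
qed

definition escaping_block ::
    "'a set set \<Rightarrow> ('a \<Rightarrow> real) set \<Rightarrow> 'a set \<Rightarrow> real \<Rightarrow> ('a \<Rightarrow> real) \<Rightarrow> 'a set \<Rightarrow> bool" where
  "escaping_block \<A> Z S \<delta> z a \<longleftrightarrow>
     z \<in> Z \<and> normA \<A> z = 1 \<and> normA \<A> (proj_on S z) \<le> \<delta> \<and>
     a \<in> \<A> \<and> a \<noteq> {} \<and> a \<inter> S = {} \<and> a \<subseteq> {\<alpha>. z \<alpha> \<noteq> 0} \<and> 1 / 4 \<le> (\<Sum>\<alpha>\<in>a. (z \<alpha>)\<^sup>2)"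

lemma escaping_block_mem: "escaping_block \<A> Z S \<delta> z a \<Longrightarrow> z \<in> Z"
  by (simp add: escaping_block_def)

lemma escaping_block_disjoint_earlier:
  assumes "escaping_block \<A> Z S \<delta> z a" "escaping_block \<A> Z S' \<delta>' z' a'"
    and "{\<alpha>. z \<alpha> \<noteq> 0} \<subseteq> S'"
  shows "a \<inter> a' = {}"
  using assms unfolding escaping_block_def by blast

lemma escaping_blocks_disjoint:
  fixes a :: "'b::linorder \<Rightarrow> nat \<Rightarrow> 'a set"
  assumes blocks: "\<And>\<xi> k. escaping_block \<A> Z (S \<xi>) (\<delta> k) (z \<xi> k) (a \<xi> k)"
    and earlier: "\<And>\<eta> \<xi> k. \<eta> < \<xi> \<Longrightarrow> {\<alpha>. z \<eta> k \<alpha> \<noteq> 0} \<subseteq> S \<xi>"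
    and "\<xi> \<noteq> \<eta>"
  shows "a \<xi> k \<inter> a \<eta> l = {}"
proof (cases "\<xi> < \<eta>")
  case True
  then show ?thesis
    by (rule escaping_block_disjoint_earlier[OF blocks blocks earlier])
next
  case False
  then have "\<eta> < \<xi>"
    using \<open>\<xi> \<noteq> \<eta>\<close> by simp
  then show ?thesis
    using escaping_block_disjoint_earlier[OF blocks blocks earlier] by blast
qed

text \<open>Tolerance 1/8 leaves a unit vector mass 1/4 outside the avoided set; the squared
  tolerances sum to 1/48, small against that mass.\<close>

definition block_tolerance :: "nat \<Rightarrow> real" where
  "block_tolerance k = 1 / (8 * 2 ^ k)"

lemma block_tolerance_pos: "0 < block_tolerance k"
  by (simp add: block_tolerance_def)

lemma block_tolerance_le: "block_tolerance k \<le> 1 / 8"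
  by (simp add: block_tolerance_def field_simps)

lemma sums_block_tolerance_squared: "(\<lambda>k. (block_tolerance k)\<^sup>2) sums (1 / 48)"
proof -
  have "(\<lambda>k. (block_tolerance k)\<^sup>2) = (\<lambda>k. 1 / 64 * (1 / 4) ^ k)"
  proof
    fix k
    show "(block_tolerance k)\<^sup>2 = 1 / 64 * (1 / 4) ^ k"
      by (simp add: block_tolerance_def power2_eq_square field_simps flip: power_mult_distrib)
  qed
  moreover have "(\<lambda>k. 1 / 64 * (1 / 4 :: real) ^ k) sums (1 / 64 * (1 / (1 - 1 / 4)))"
    by (intro sums_mult geometric_sums) simp
  ultimately show ?thesis by simp
qed

section \<open>Hereditary families\<close>

locale hereditary_family =
  fixes \<A> :: "'a set set"
  assumes finite_member: "a \<in> \<A> \<Longrightarrow> finite a"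
    and subset_member: "a \<in> \<A> \<Longrightarrow> b \<subseteq> a \<Longrightarrow> b \<in> \<A>"
    and singleton_member: "{\<alpha>} \<in> \<A>"
begin

lemma nonempty: "\<A> \<noteq> {}"
  using singleton_member by blast

lemma abs_le_normA: "normA_finite \<A> x \<Longrightarrow> \<bar>x \<alpha>\<bar> \<le> normA \<A> x"
  using L2_set_le_normA[OF _ singleton_member] by (simp add: L2_set_def)

lemma countable_support_XA:
  assumes "x \<in> XA \<A>"
  shows "countable {\<alpha>. x \<alpha> \<noteq> 0}"
proof -
  have "\<exists>y\<in>c00. normA \<A> (\<lambda>\<alpha>. x \<alpha> - y \<alpha>) < 1 / Suc n" for n
    using XA_approx_c00[OF assms] by simp
  then obtain y where y: "\<And>n. y n \<in> c00" "\<And>n. normA \<A> (\<lambda>\<alpha>. x \<alpha> - y n \<alpha>) < 1 / Suc n"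
    by metis
  have "{\<alpha>. x \<alpha> \<noteq> 0} \<subseteq> (\<Union>n. {\<alpha>. y n \<alpha> \<noteq> 0})"
  proof
    fix \<alpha> assume "\<alpha> \<in> {\<alpha>. x \<alpha> \<noteq> 0}"
    then obtain n where n: "1 / Suc n < \<bar>x \<alpha>\<bar>"
      using reals_Archimedean[of "\<bar>x \<alpha>\<bar>"] by (auto simp: inverse_eq_divide)
    have "\<bar>x \<alpha> - y n \<alpha>\<bar> \<le> normA \<A> (\<lambda>\<alpha>. x \<alpha> - y n \<alpha>)"
      using nonempty normA_finite_XA[OF assms] normA_finite_c00[OF y(1)]
      by (intro abs_le_normA normA_finite_diff)
    then show "\<alpha> \<in> (\<Union>n. {\<alpha>. y n \<alpha> \<noteq> 0})"
      using y(2)[of n] n by (cases "y n \<alpha> = 0") auto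
  qed
  moreover have "countable (\<Union>n. {\<alpha>. y n \<alpha> \<noteq> 0})"
    using y(1) unfolding c00_def by (auto intro: countable_finite)
  ultimately show ?thesis by (rule countable_subset)
qed


lemma
  assumes "normA_finite \<A> x"
  shows normA_proj_on_le: "normA \<A> (proj_on S x) \<le> normA \<A> x"
    and normA_finite_proj_on: "normA_finite \<A> (proj_on S x)"
proof -
  have "L2_set (proj_on S x) a \<le> normA \<A> x" if "a \<in> \<A>" for a
    using that by (simp add: L2_set_proj_on finite_member L2_set_le_normA[OF assms] subset_member)
  then show "normA \<A> (proj_on S x) \<le> normA \<A> x" "normA_finite \<A> (proj_on S x)"
    using nonempty by (auto intro: normA_le normA_finiteI)
qed

lemma proj_on_c00_approx_rational:
  assumes y: "y \<in> c00" and e: "e > 0"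
  shows "\<exists>d \<in> rational_c00_on S. normA \<A> (\<lambda>\<alpha>. proj_on S y \<alpha> - d \<alpha>) < e"
proof -
  define F where "F = {\<alpha> \<in> S. y \<alpha> \<noteq> 0}"
  have F: "finite F" using y unfolding c00_def F_def by (auto intro: finite_subset)
  define \<eta> where "\<eta> = e / (card F + 1)"
  have \<eta>: "\<eta> > 0" "card F * \<eta> < e"
  proof -
    show "\<eta> > 0" using e by (simp add: \<eta>_def)
    have "card F * \<eta> = e * (card F / (card F + 1))"
      by (simp add: \<eta>_def)
    also have "\<dots> < e"
      using e mult_strict_left_mono[of "card F / (card F + 1)" 1 e] by simp
    finally show "card F * \<eta> < e" .
  qed
  obtain q where q: "\<forall>\<alpha>. q \<alpha> \<in> \<rat> \<and> \<bar>y \<alpha> - q \<alpha>\<bar> < \<eta>"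
    using exists_rational_approx[where y = y, OF \<eta>(1)] by blast
  define d where "d = proj_on F q"
  have supp_d: "{\<alpha>. d \<alpha> \<noteq> 0} \<subseteq> F"
    by (auto simp: d_def proj_on_def)
  have "d \<in> rational_c00_on S"
    using finite_subset[OF supp_d F] supp_d q unfolding rational_c00_on_def c00_def
    by (auto simp: F_def d_def proj_on_def)
  moreover have "normA \<A> (\<lambda>\<alpha>. proj_on S y \<alpha> - d \<alpha>) < e"
  proof -
    have on_F: "\<bar>proj_on S y \<alpha> - d \<alpha>\<bar> < \<eta>" if "\<alpha> \<in> F" for \<alpha>
      using q that by (simp add: d_def proj_on_def F_def)
    have off_F: "proj_on S y \<alpha> - d \<alpha> = 0" if "\<alpha> \<notin> F" for \<alpha>
      using that by (simp add: d_def proj_on_def F_def)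
    have "normA \<A> (\<lambda>\<alpha>. proj_on S y \<alpha> - d \<alpha>) \<le> (\<Sum>\<alpha>\<in>F. \<bar>proj_on S y \<alpha> - d \<alpha>\<bar>)"
      using F nonempty off_F by (intro normA_le L2_set_le_sum_abs_support) auto
    also have "\<dots> \<le> (\<Sum>\<alpha>\<in>F. \<eta>)"
      using on_F by (intro sum_mono less_imp_le)
    also have "\<dots> < e" using \<eta>(2) by simp
    finally show ?thesis .
  qed
  ultimately show ?thesis by blast
qed

lemma proj_on_XA_approx_rational:
  assumes x: "x \<in> XA \<A>" and e: "e > 0"
  shows "\<exists>d \<in> rational_c00_on S. normA \<A> (\<lambda>\<alpha>. proj_on S x \<alpha> - d \<alpha>) < e"
proof -
  obtain y where y: "y \<in> c00" "normA \<A> (\<lambda>\<alpha>. x \<alpha> - y \<alpha>) < e / 2"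
    using XA_approx_c00[OF x, of "e / 2"] e by auto
  obtain d where d: "d \<in> rational_c00_on S" "normA \<A> (\<lambda>\<alpha>. proj_on S y \<alpha> - d \<alpha>) < e / 2"
    using proj_on_c00_approx_rational[OF y(1), of "e / 2" S] e by auto
  have xy: "normA_finite \<A> (\<lambda>\<alpha>. x \<alpha> - y \<alpha>)"
    using nonempty normA_finite_XA[OF x] normA_finite_c00[OF y(1)] by (rule normA_finite_diff)
  have d_fin: "normA_finite \<A> d"
    using d(1) normA_finite_c00 unfolding rational_c00_on_def by blast
  have "(\<lambda>\<alpha>. proj_on S x \<alpha> - d \<alpha>)
      = (\<lambda>\<alpha>. proj_on S (\<lambda>\<alpha>. x \<alpha> - y \<alpha>) \<alpha> + (proj_on S y \<alpha> - d \<alpha>))"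
    by (auto simp: proj_on_def)
  then have "normA \<A> (\<lambda>\<alpha>. proj_on S x \<alpha> - d \<alpha>)
      \<le> normA \<A> (proj_on S (\<lambda>\<alpha>. x \<alpha> - y \<alpha>)) + normA \<A> (\<lambda>\<alpha>. proj_on S y \<alpha> - d \<alpha>)"
    using nonempty normA_finite_proj_on[OF xy] normA_finite_c00[OF y(1)] d_fin normA_finite_XA[OF x]
    by (simp only:) (intro normA_add_le normA_finite_diff normA_finite_proj_on)
  also have "\<dots> < e"
    using normA_proj_on_le[OF xy, of S] y(2) d(2) by linarith
  finally show ?thesis
    using d(1) by blast
qed

lemma bounded_below_proj_on_close:
  assumes Z: "closed_subspace_XA \<A> Z"
    and below: "\<And>y. y \<in> Z \<Longrightarrow> \<delta> * normA \<A> y \<le> normA \<A> (proj_on S y)"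
    and z: "z \<in> Z" "z' \<in> Z" and d: "normA_finite \<A> d"
    and close: "normA \<A> (\<lambda>\<alpha>. proj_on S z \<alpha> - d \<alpha>) < r" "normA \<A> (\<lambda>\<alpha>. proj_on S z' \<alpha> - d \<alpha>) < r"
  shows "\<delta> * normA \<A> (\<lambda>\<alpha>. z \<alpha> - z' \<alpha>) < 2 * r"
proof -
  have fin: "normA_finite \<A> z" "normA_finite \<A> z'"
    using z closed_subspace_XA_subset[OF Z] normA_finite_XA by blast+
  have "proj_on S (\<lambda>\<alpha>. z \<alpha> - z' \<alpha>) = (\<lambda>\<alpha>. (proj_on S z \<alpha> - d \<alpha>) - (proj_on S z' \<alpha> - d \<alpha>))"
    by (auto simp: proj_on_def)
  then have "normA \<A> (proj_on S (\<lambda>\<alpha>. z \<alpha> - z' \<alpha>))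
      \<le> normA \<A> (\<lambda>\<alpha>. proj_on S z \<alpha> - d \<alpha>) + normA \<A> (\<lambda>\<alpha>. proj_on S z' \<alpha> - d \<alpha>)"
    using nonempty fin d
    by (simp only:) (intro normA_diff_le normA_finite_diff normA_finite_proj_on)
  then show ?thesis
    using below[OF closed_subspace_XA_diff[OF Z z]] close by linarith
qed

lemma separable_if_proj_on_bounded_below:
  assumes Z: "closed_subspace_XA \<A> Z" and S: "countable S" and \<delta>: "\<delta> > 0"
    and below: "\<And>y. y \<in> Z \<Longrightarrow> \<delta> * normA \<A> y \<le> normA \<A> (proj_on S y)"
  shows "separable_XA \<A> Z"
proof -
  define near where "near p z \<longleftrightarrow> z \<in> Z \<and> normA \<A> (\<lambda>\<alpha>. proj_on S z \<alpha> - fst p \<alpha>) < 1 / Suc (snd p)"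
    for p :: "('a \<Rightarrow> real) \<times> nat" and z
  let ?P = "rational_c00_on S \<times> (UNIV :: nat set)"
  have "countable ?P"
    using countable_rational_c00_on[OF S] by simp
  from countable_witnesses[OF this, of near]
  obtain D where D: "countable D" "D \<subseteq> {z. \<exists>p\<in>?P. near p z}"
    and witness: "\<forall>p\<in>?P. \<forall>z. near p z \<longrightarrow> (\<exists>z'\<in>D. near p z')"
    by blast
  have "D \<subseteq> Z"
    using D(2) by (auto simp: near_def)
  have "\<exists>z'\<in>D. normA \<A> (\<lambda>\<alpha>. z \<alpha> - z' \<alpha>) < e" if z: "z \<in> Z" and e: "e > 0" for z e
  proof -
    obtain n :: nat where n: "1 / Suc n < \<delta> * e / 2"
      using \<delta> e by (metis half_gt_zero mult_pos_pos reals_Archimedean inverse_eq_divide)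
    obtain d where d: "d \<in> rational_c00_on S" "normA \<A> (\<lambda>\<alpha>. proj_on S z \<alpha> - d \<alpha>) < 1 / Suc n"
      using proj_on_XA_approx_rational[of z "1 / Suc n" S] z closed_subspace_XA_subset[OF Z] by auto
    then obtain z' where "z' \<in> D" "near (d, n) z'"
      using witness z by (auto simp: near_def)
    then have "\<delta> * normA \<A> (\<lambda>\<alpha>. z \<alpha> - z' \<alpha>) < 2 * (1 / Suc n)"
      using d z unfolding near_def rational_c00_on_def
      by (intro bounded_below_proj_on_close[OF Z below]) (auto intro: normA_finite_c00)
    then have "\<delta> * normA \<A> (\<lambda>\<alpha>. z \<alpha> - z' \<alpha>) < \<delta> * e"
      using n by linarith
    then show ?thesis
      using \<delta> \<open>z' \<in> D\<close> by auto
  qed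
  then show ?thesis
    unfolding separable_XA_def using D(1) \<open>D \<subseteq> Z\<close> by blast
qed

lemma exists_unit_vector_small_on_countable:
  assumes Z: "closed_subspace_XA \<A> Z" and "\<not> separable_XA \<A> Z"
    and S: "countable S" and \<delta>: "\<delta> > 0"
  shows "\<exists>z\<in>Z. normA \<A> z = 1 \<and> normA \<A> (proj_on S z) \<le> \<delta>"
proof (rule ccontr)
  assume "\<not> ?thesis"
  then have large: "\<delta> < normA \<A> (proj_on S z)" if "z \<in> Z" "normA \<A> z = 1" for z
    using that by force
  have "\<delta> * normA \<A> y \<le> normA \<A> (proj_on S y)" if y: "y \<in> Z" for y
  proof -
    have y_fin: "normA_finite \<A> y"
      using y closed_subspace_XA_subset[OF Z] normA_finite_XA by blast
    show ?thesis
    proof (cases "normA \<A> y = 0")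
      case True
      then show ?thesis
        using normA_nonneg[OF normA_finite_proj_on[OF y_fin] nonempty] by simp
    next
      case False
      then have N: "normA \<A> y > 0"
        using normA_nonneg[OF y_fin nonempty] by linarith
      let ?u = "\<lambda>\<alpha>. (1 / normA \<A> y) * y \<alpha>"
      have "normA \<A> ?u = 1"
        using N normA_scale[OF nonempty y_fin, of "1 / normA \<A> y"] by simp
      then have "\<delta> < normA \<A> (proj_on S ?u)"
        using large closed_subspace_XA_scale[OF Z y] by blast
      also have "proj_on S ?u = (\<lambda>\<alpha>. (1 / normA \<A> y) * proj_on S y \<alpha>)"
        by (auto simp: proj_on_def)
      also have "normA \<A> \<dots> = normA \<A> (proj_on S y) / normA \<A> y"
        using N normA_scale[OF nonempty normA_finite_proj_on[OF y_fin], of "1 / normA \<A> y"] by simp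
      finally show ?thesis
        using N by (simp add: field_simps)
    qed
  qed
  then show False
    using separable_if_proj_on_bounded_below[OF Z S \<delta>] assms(2) by blast
qed

lemma exists_heavy_member_outside:
  assumes z: "normA_finite \<A> z" "normA \<A> z = 1" and small: "normA \<A> (proj_on S z) \<le> 1 / 8"
  shows "\<exists>a\<in>\<A>. a \<noteq> {} \<and> a \<inter> S = {} \<and> a \<subseteq> {\<alpha>. z \<alpha> \<noteq> 0} \<and> 1 / 4 \<le> (\<Sum>\<alpha>\<in>a. (z \<alpha>)\<^sup>2)"
proof -
  obtain b where b: "b \<in> \<A>" "9 / 10 < L2_set z b"
    using z less_cSUP_iff[OF nonempty z(1)[unfolded normA_finite_iff_bdd_L2_set], of "9 / 10"]
    by (auto simp: normA_eq_SUP_L2_set)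
  have b_fin: "finite b" using finite_member[OF b(1)] .
  have "(9 / 10)\<^sup>2 < (L2_set z b)\<^sup>2"
    using b(2) by (intro power_strict_mono) auto
  then have on_b: "81 / 100 < (\<Sum>\<alpha>\<in>b. (z \<alpha>)\<^sup>2)"
    by (simp add: L2_set_def sum_nonneg power_divide)
  have "L2_set z (b \<inter> S) \<le> 1 / 8"
    using L2_set_le_normA[OF normA_finite_proj_on[OF z(1)] b(1), of S] small
    by (simp add: L2_set_proj_on b_fin)
  then have "(L2_set z (b \<inter> S))\<^sup>2 \<le> (1 / 8)\<^sup>2"
    by (intro power_mono) auto
  then have on_bS: "(\<Sum>\<alpha>\<in>b \<inter> S. (z \<alpha>)\<^sup>2) \<le> 1 / 64"
    by (simp add: L2_set_def sum_nonneg power_divide)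
  define a where "a = (b - S) \<inter> {\<alpha>. z \<alpha> \<noteq> 0}"
  have "(\<Sum>\<alpha>\<in>a. (z \<alpha>)\<^sup>2) = (\<Sum>\<alpha>\<in>b - S. (z \<alpha>)\<^sup>2)"
    unfolding a_def using b_fin by (intro sum.mono_neutral_left) auto
  also have "\<dots> = (\<Sum>\<alpha>\<in>b. (z \<alpha>)\<^sup>2) - (\<Sum>\<alpha>\<in>b \<inter> S. (z \<alpha>)\<^sup>2)"
    using sum.Int_Diff[OF b_fin, of "\<lambda>\<alpha>. (z \<alpha>)\<^sup>2" S] by simp
  finally have mass: "1 / 4 \<le> (\<Sum>\<alpha>\<in>a. (z \<alpha>)\<^sup>2)"
    using on_b on_bS by linarith
  moreover have "a \<in> \<A>"
    unfolding a_def using b(1) by (rule subset_member) auto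
  ultimately show ?thesis
    by (intro bexI[of _ a]) (auto simp: a_def)
qed

lemma exists_escaping_block:
  assumes Z: "closed_subspace_XA \<A> Z" and "\<not> separable_XA \<A> Z"
    and "countable S" "\<delta> > 0" and \<delta>: "\<delta> \<le> 1 / 8"
  shows "\<exists>z a. escaping_block \<A> Z S \<delta> z a"
proof -
  obtain z where z: "z \<in> Z" "normA \<A> z = 1" "normA \<A> (proj_on S z) \<le> \<delta>"
    using exists_unit_vector_small_on_countable[OF assms(1-4)] by blast
  have "normA_finite \<A> z"
    using z(1) closed_subspace_XA_subset[OF Z] normA_finite_XA by blast
  moreover have "normA \<A> (proj_on S z) \<le> 1 / 8"
    using z(3) \<delta> by linarith
  ultimately obtain a where "a \<in> \<A>" "a \<noteq> {}" "a \<inter> S = {}" "a \<subseteq> {\<alpha>. z \<alpha> \<noteq> 0}"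
    "1 / 4 \<le> (\<Sum>\<alpha>\<in>a. (z \<alpha>)\<^sup>2)"
    using exists_heavy_member_outside z(2) by blast
  then show ?thesis
    using z unfolding escaping_block_def by blast
qed

lemma exists_transfinite_escaping_blocks:
  fixes Z :: "('a \<Rightarrow> real) set"
  assumes initial: "\<And>\<xi>::'b::wellorder. countable {..<\<xi>}"
    and Z: "closed_subspace_XA \<A> Z" and nonsep: "\<not> separable_XA \<A> Z"
  shows "\<exists>(z :: 'b \<Rightarrow> nat \<Rightarrow> 'a \<Rightarrow> real) a S.
           (\<forall>\<xi> k. escaping_block \<A> Z (S \<xi>) (block_tolerance k) (z \<xi> k) (a \<xi> k)) \<and>
           (\<forall>\<eta> \<xi> k. \<eta> < \<xi> \<longrightarrow> {\<alpha>. z \<eta> k \<alpha> \<noteq> 0} \<subseteq> S \<xi>)"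
proof -
  let ?blocks = "\<lambda>S x. \<forall>k. escaping_block \<A> Z S (block_tolerance k) (fst (x k)) (snd (x k))"
  let ?used = "\<lambda>x. \<Union>k. {\<alpha>. fst (x k) \<alpha> \<noteq> 0}"
  have choose: "\<exists>x. ?blocks S x \<and> countable (?used x)" if "countable S" for S
  proof -
    have "\<exists>p. escaping_block \<A> Z S (block_tolerance k) (fst p) (snd p)" for k
      using exists_escaping_block[OF Z nonsep that block_tolerance_pos block_tolerance_le] by auto
    then have "\<forall>k. \<exists>p. escaping_block \<A> Z S (block_tolerance k) (fst p) (snd p)" ..
    from choice[OF this] obtain x where x: "?blocks S x" by blast
    have "fst (x k) \<in> XA \<A>" for k
      using x escaping_block_mem closed_subspace_XA_subset[OF Z] by blast
    then have "countable (?used x)"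
      by (intro countable_UN countable_support_XA) auto
    with x show ?thesis by blast
  qed
  obtain x :: "'b \<Rightarrow> nat \<Rightarrow> ('a \<Rightarrow> real) \<times> 'a set"
    where x: "\<forall>\<xi>. ?blocks (\<Union>\<eta>\<in>{..<\<xi>}. ?used (x \<eta>)) (x \<xi>)"
    using transfinite_fresh_choice[where P = ?blocks and used = ?used, OF initial choose] by blast
  define z where "z \<xi> k = fst (x \<xi> k)" for \<xi> k
  define a where "a \<xi> k = snd (x \<xi> k)" for \<xi> k
  define S where "S \<xi> = (\<Union>\<eta>\<in>{..<\<xi>}. ?used (x \<eta>))" for \<xi>
  have "\<forall>\<xi> k. escaping_block \<A> Z (S \<xi>) (block_tolerance k) (z \<xi> k) (a \<xi> k)"
    using x by (simp add: z_def a_def S_def)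
  moreover have "\<forall>\<eta> \<xi> k. \<eta> < \<xi> \<longrightarrow> {\<alpha>. z \<eta> k \<alpha> \<noteq> 0} \<subseteq> S \<xi>"
    by (auto simp: z_def S_def)
  ultimately show ?thesis by blast
qed

end

section \<open>Strong T-colorings\<close>

lemma T0_family_iff:
  "a \<in> T0_family c \<longleftrightarrow> finite a \<and> (\<forall>x\<in>a. \<forall>y\<in>a. x \<noteq> y \<longrightarrow> fst (c {x, y}) = 0)"
  unfolding T0_family_def pairs2_def by auto

lemma hereditary_family_T0_family: "hereditary_family (T0_family c)"
proof
  fix a b :: "'a set" and \<alpha> :: 'a
  show "a \<in> T0_family c \<Longrightarrow> finite a"
    by (simp add: T0_family_iff)
  show "a \<in> T0_family c \<Longrightarrow> b \<subseteq> a \<Longrightarrow> b \<in> T0_family c"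
    unfolding T0_family_iff by (meson finite_subset subsetD)
  show "{\<alpha>} \<in> T0_family c"
    by (simp add: T0_family_iff)
qed

lemma T0_family_Un_cross:
  assumes bu: "b \<union> u \<in> T0_family c" and bv: "b \<union> v \<in> T0_family c"
    and cross: "(fst \<circ> c) ` otimes u v \<subseteq> {0}"
  shows "b \<union> u \<union> v \<in> T0_family c"
proof -
  have uv: "fst (c {x, y}) = 0" if "x \<in> u" "y \<in> v" for x y
  proof -
    have "{x, y} \<in> otimes u v"
      unfolding otimes_def using that by blast
    then show ?thesis
      using cross by auto
  qed
  have "fst (c {x, y}) = 0" if xy: "x \<in> b \<union> u \<union> v" "y \<in> b \<union> u \<union> v" "x \<noteq> y" for x y
  proof -
    consider "x \<in> b \<union> u" "y \<in> b \<union> u" | "x \<in> b \<union> v" "y \<in> b \<union> v" | "x \<in> u" "y \<in> v" | "x \<in> v" "y \<in> u"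
      using xy(1,2) by blast
    then show ?thesis
    proof cases
      case 1
      then show ?thesis using bu \<open>x \<noteq> y\<close> by (simp add: T0_family_iff)
    next
      case 2
      then show ?thesis using bv \<open>x \<noteq> y\<close> by (simp add: T0_family_iff)
    next
      case 3
      then show ?thesis by (rule uv)
    next
      case 4
      then show ?thesis using uv[of y x] by (simp add: insert_commute)
    qed
  qed
  moreover have "finite (b \<union> u \<union> v)"
    using bu bv by (simp add: T0_family_iff)
  ultimately show ?thesis
    by (simp add: T0_family_iff)
qed

lemma strong_T_coloring_homogeneous_0:
  fixes c :: "'a::wellorder set \<Rightarrow> 'i::zero_neq_one \<times> 'j" and A :: "'a \<Rightarrow> 'a set"
  assumes "strong_T_coloring c I J"
    and "\<And>\<xi>. finite (A \<xi>)" "\<And>\<xi>. A \<xi> \<noteq> {}" "\<And>\<xi> \<eta>. \<xi> \<noteq> \<eta> \<Longrightarrow> A \<xi> \<inter> A \<eta> = {}"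
  shows "\<exists>\<xi> \<eta>. \<xi> < \<eta> \<and> (fst \<circ> c) ` otimes (A \<xi>) (A \<eta>) = {0}"
proof -
  have "(\<forall>\<xi>. finite (A \<xi>) \<and> A \<xi> \<noteq> {}) \<and> (\<forall>\<xi> \<eta>. \<xi> \<noteq> \<eta> \<longrightarrow> A \<xi> \<inter> A \<eta> = {})"
    using assms(2-4) by blast
  from mp[OF spec[OF conjunct2[OF assms(1)[unfolded strong_T_coloring_def]], of A] this]
  show ?thesis by (rule conjunct1)
qed

lemma strong_T_coloring_cross_pair:
  fixes c :: "'a::wellorder set \<Rightarrow> 'i::zero_neq_one \<times> 'j" and a :: "'a \<Rightarrow> nat \<Rightarrow> 'a set"
    and x y :: "'a \<Rightarrow> 'a"
  assumes st: "strong_T_coloring c I J"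
    and blocks: "\<And>\<xi> k. finite (a \<xi> k)" "\<And>\<xi> k. a \<xi> k \<noteq> {}"
    and disj: "\<And>\<xi> \<eta> k l. \<xi> \<noteq> \<eta> \<Longrightarrow> a \<xi> k \<inter> a \<eta> l = {}"
    and fresh: "\<And>\<alpha> \<gamma>. \<alpha> \<noteq> \<gamma> \<Longrightarrow> {x \<alpha>, y \<alpha>} \<inter> {x \<gamma>, y \<gamma>} = {}"
  shows "\<exists>\<alpha> \<gamma>. \<alpha> < \<gamma> \<and> (fst \<circ> c) ` otimes (a (x \<alpha>) n) (a (y \<gamma>) k) \<subseteq> {0}"
proof -
  define A where "A \<alpha> = a (x \<alpha>) n \<union> a (y \<alpha>) k" for \<alpha>
  have A_disj: "A \<alpha> \<inter> A \<gamma> = {}" if "\<alpha> \<noteq> \<gamma>" for \<alpha> \<gamma>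
  proof -
    have "x \<alpha> \<noteq> x \<gamma>" "x \<alpha> \<noteq> y \<gamma>" "y \<alpha> \<noteq> x \<gamma>" "y \<alpha> \<noteq> y \<gamma>"
      using fresh[OF that] by auto
    then show ?thesis
      unfolding A_def by (simp add: Int_Un_distrib Int_Un_distrib2 disj)
  qed
  have A_fin: "finite (A \<alpha>)" and A_ne: "A \<alpha> \<noteq> {}" for \<alpha>
    using blocks unfolding A_def by auto
  obtain \<alpha> \<gamma> where "\<alpha> < \<gamma>" and hom: "(fst \<circ> c) ` otimes (A \<alpha>) (A \<gamma>) = {0}"
    using strong_T_coloring_homogeneous_0[where A = A, OF st A_fin A_ne A_disj] by blast
  have "otimes (a (x \<alpha>) n) (a (y \<gamma>) k) \<subseteq> otimes (A \<alpha>) (A \<gamma>)"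
    unfolding otimes_def A_def by blast
  then have "(fst \<circ> c) ` otimes (a (x \<alpha>) n) (a (y \<gamma>) k) \<subseteq> {0}"
    using hom by (metis image_mono)
  with \<open>\<alpha> < \<gamma>\<close> show ?thesis by blast
qed

definition extendable :: "('a set \<Rightarrow> 'i::zero_neq_one \<times> 'j) \<Rightarrow> ('a \<Rightarrow> nat \<Rightarrow> 'a set) \<Rightarrow> nat \<Rightarrow> 'a set \<Rightarrow> bool" where
  "extendable c a n b \<longleftrightarrow> b \<in> T0_family c \<and> (\<forall>k\<ge>n. uncountable {\<xi>. b \<union> a \<xi> k \<in> T0_family c})"

lemma extendable_empty:
  fixes a :: "'a::wellorder \<Rightarrow> nat \<Rightarrow> 'a set"
  assumes "is_omega1 TYPE('a)" "\<And>\<xi> k. a \<xi> k \<in> T0_family c"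
  shows "extendable c a 0 {}"
  using assms unfolding extendable_def is_omega1_def by (simp add: T0_family_iff)

text \<open>If no such \<open>\<xi>\<close> existed, uncountably many \<open>\<xi> > \<beta>\<close> would get stuck at one
  level \<open>k\<close>. Pairing them with fresh partners \<open>\<eta>\<close> such that \<open>b \<union> a \<eta> k\<close> is still in
  the family, the strong coloring yields \<open>\<xi>\<close> and a later partner \<open>\<eta>\<close> with
  \<open>b \<union> a \<xi> n \<union> a \<eta> k\<close> in the family, although \<open>\<eta>\<close> was chosen outside the countable
  set of such partners of \<open>\<xi>\<close>.\<close>

lemma extendable_step:
  fixes c :: "'a::wellorder set \<Rightarrow> 'i::zero_neq_one \<times> 'j" and a :: "'a \<Rightarrow> nat \<Rightarrow> 'a set"
  assumes om: "is_omega1 TYPE('a)" and st: "strong_T_coloring c I J"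
    and blocks: "\<And>\<xi> k. a \<xi> k \<in> T0_family c" "\<And>\<xi> k. a \<xi> k \<noteq> {}"
    and disj: "\<And>\<xi> \<eta> k l. \<xi> \<noteq> \<eta> \<Longrightarrow> a \<xi> k \<inter> a \<eta> l = {}"
    and ext: "extendable c a n b"
  shows "\<exists>\<xi>>\<beta>. extendable c a (Suc n) (b \<union> a \<xi> n)"
proof (rule ccontr)
  let ?A = "T0_family c"
  define C where "C \<xi> k = {\<eta>. b \<union> a \<xi> n \<union> a \<eta> k \<in> ?A}" for \<xi> k
  define U where "U = {\<xi> \<in> {\<xi>. b \<union> a \<xi> n \<in> ?A}. \<beta> < \<xi>}"
  assume "\<not> ?thesis"
  then have "U \<subseteq> (\<Union>k\<in>{Suc n..}. {\<xi> \<in> U. countable (C \<xi> k)})"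
    unfolding U_def C_def extendable_def by auto
  moreover have "uncountable U"
    unfolding U_def using ext by (intro omega1_uncountable_above[OF om]) (simp add: extendable_def)
  ultimately obtain k where "Suc n \<le> k" and k: "uncountable {\<xi> \<in> U. countable (C \<xi> k)}"
    using uncountable_UN_countable[where I = "{Suc n..}"] countableI_type by force
  define X where "X = {\<xi> \<in> U. countable (C \<xi> k)}"
  have Y: "uncountable {\<eta>. b \<union> a \<eta> k \<in> ?A}"
    using ext \<open>Suc n \<le> k\<close> by (simp add: extendable_def)
  have "countable (C \<xi> k)" if "\<xi> \<in> X" for \<xi>
    using that by (simp add: X_def)
  from transfinite_fresh_pairs[where C = "\<lambda>\<xi>. C \<xi> k", OF omega1_countable_initial[OF om] k[folded X_def] Y this]
  obtain x y :: "'a \<Rightarrow> 'a" where xy: "\<forall>\<alpha>. x \<alpha> \<in> X \<and> b \<union> a (y \<alpha>) k \<in> ?A"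
    and fresh: "\<forall>\<alpha> \<gamma>. \<alpha> < \<gamma> \<longrightarrow> {x \<gamma>, y \<gamma>} \<inter> ({x \<alpha>, y \<alpha>} \<union> C (x \<alpha>) k) = {}"
    by auto
  have "{x \<alpha>, y \<alpha>} \<inter> {x \<gamma>, y \<gamma>} = {}" if "\<alpha> \<noteq> \<gamma>" for \<alpha> \<gamma>
    using fresh that by (cases "\<alpha> < \<gamma>") (auto dest: not_less_iff_gr_or_eq[THEN iffD1])
  moreover have "finite (a \<xi> l)" for \<xi> l
    using blocks(1) by (simp add: T0_family_iff)
  ultimately obtain \<alpha> \<gamma> where "\<alpha> < \<gamma>" and cross: "(fst \<circ> c) ` otimes (a (x \<alpha>) n) (a (y \<gamma>) k) \<subseteq> {0}"
    using strong_T_coloring_cross_pair[where a = a and x = x and y = y, OF st _ blocks(2) disj]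
    by blast
  have "b \<union> a (x \<alpha>) n \<in> ?A"
    using xy unfolding X_def U_def by blast
  then have "y \<gamma> \<in> C (x \<alpha>) k"
    using T0_family_Un_cross[OF _ _ cross] xy unfolding C_def by blast
  then show False
    using fresh \<open>\<alpha> < \<gamma>\<close> by blast
qed

lemma exists_increasing_T0_union:
  fixes c :: "'a::wellorder set \<Rightarrow> 'i::zero_neq_one \<times> 'j" and a :: "'a \<Rightarrow> nat \<Rightarrow> 'a set"
  assumes om: "is_omega1 TYPE('a)" and st: "strong_T_coloring c I J"
    and blocks: "\<And>\<xi> k. a \<xi> k \<in> T0_family c" "\<And>\<xi> k. a \<xi> k \<noteq> {}"
    and disj: "\<And>\<xi> \<eta> k l. \<xi> \<noteq> \<eta> \<Longrightarrow> a \<xi> k \<inter> a \<eta> l = {}"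
  shows "\<exists>s. strict_mono s \<and> (\<forall>N. (\<Union>n<N. a (s n) n) \<in> T0_family c)"
proof -
  let ?P = "\<lambda>n (b, \<xi>). extendable c a n b \<and> (n = 0 \<longrightarrow> b = {})"
  let ?Q = "\<lambda>n (b, \<xi>) (b', \<xi>'). \<xi> < \<xi>' \<and> b' = b \<union> a \<xi>' n"
  have start: "\<exists>p. ?P 0 p"
    using extendable_empty[OF om blocks(1)] by auto
  have step: "\<exists>q. ?P (Suc n) q \<and> ?Q n p q" if "?P n p" for n p
  proof -
    obtain b \<xi> where p: "p = (b, \<xi>)" by fastforce
    have ext: "extendable c a n b"
      using that p by simp
    obtain \<xi>' where "\<xi> < \<xi>'" "extendable c a (Suc n) (b \<union> a \<xi>' n)"
      using extendable_step[where a = a and \<beta> = \<xi>, OF om st blocks disj ext] by blast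
    then show ?thesis
      using p by (intro exI[of _ "(b \<union> a \<xi>' n, \<xi>')"]) simp
  qed
  obtain f where f: "\<And>n. ?P n (f n) \<and> ?Q n (f n) (f (Suc n))"
    using dependent_nat_choice[where P = ?P and Q = ?Q, OF start step] by blast
  define s where "s n = snd (f (Suc n))" for n
  have "s n < s (Suc n)" for n
    using f[of "Suc n"] unfolding s_def by (simp add: case_prod_beta)
  then have "strict_mono s"
    by (rule strict_mono_Suc_iff[THEN iffD2, rule_format])
  moreover have "fst (f N) = (\<Union>n<N. a (s n) n)" for N
  proof (induction N)
    case 0
    then show ?case using f[of 0] by (simp add: case_prod_beta)
  next
    case (Suc N)
    then show ?case using f[of N] by (simp add: case_prod_beta s_def lessThan_Suc Un_commute)
  qed
  moreover have "fst (f N) \<in> T0_family c" for N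
    using f[of N] by (simp add: case_prod_beta extendable_def)
  ultimately show ?thesis by auto
qed

section \<open>Square-summable sequences\<close>

lemma summable_mult_if_summable_squares:
  fixes u v :: "nat \<Rightarrow> real"
  assumes "summable (\<lambda>n. (u n)\<^sup>2)" "summable (\<lambda>n. (v n)\<^sup>2)"
  shows "summable (\<lambda>n. u n * v n)"
proof (rule summable_comparison_test)
  have "norm (u n * v n) \<le> ((u n)\<^sup>2 + (v n)\<^sup>2) / 2" for n
    using sum_squares_bound[of "\<bar>u n\<bar>" "\<bar>v n\<bar>"] by (simp add: abs_mult)
  then show "\<exists>N. \<forall>n\<ge>N. norm (u n * v n) \<le> ((u n)\<^sup>2 + (v n)\<^sup>2) / 2"
    by blast
  show "summable (\<lambda>n. ((u n)\<^sup>2 + (v n)\<^sup>2) / 2)"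
    using summable_add[OF assms] by (rule summable_divide)
qed

lemma suminf_mult_squared_le:
  fixes u v :: "nat \<Rightarrow> real"
  assumes u: "summable (\<lambda>n. (u n)\<^sup>2)" and v: "summable (\<lambda>n. (v n)\<^sup>2)"
  shows "(\<Sum>n. u n * v n)\<^sup>2 \<le> (\<Sum>n. (u n)\<^sup>2) * (\<Sum>n. (v n)\<^sup>2)"
proof (rule LIMSEQ_le_const2)
  show "(\<lambda>N. (\<Sum>n<N. u n * v n)\<^sup>2) \<longlonglongrightarrow> (\<Sum>n. u n * v n)\<^sup>2"
    by (intro tendsto_power summable_LIMSEQ summable_mult_if_summable_squares u v)
  have "(\<Sum>n<N. u n * v n)\<^sup>2 \<le> (\<Sum>n. (u n)\<^sup>2) * (\<Sum>n. (v n)\<^sup>2)" for N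
  proof -
    have "(\<Sum>n<N. u n * v n)\<^sup>2 \<le> (\<Sum>n<N. (u n)\<^sup>2) * (\<Sum>n<N. (v n)\<^sup>2)"
      by (rule Cauchy_Schwarz_ineq_sum)
    also have "\<dots> \<le> (\<Sum>n. (u n)\<^sup>2) * (\<Sum>n. (v n)\<^sup>2)"
      by (intro mult_mono sum_le_suminf u v) (auto intro: sum_nonneg suminf_nonneg u v)
    finally show ?thesis .
  qed
  then show "\<exists>N. \<forall>M\<ge>N. (\<Sum>n<M. u n * v n)\<^sup>2 \<le> (\<Sum>n. (u n)\<^sup>2) * (\<Sum>n. (v n)\<^sup>2)"
    by blast
qed

lemma at_most_one_nonzero_sums:
  fixes u :: "nat \<Rightarrow> real"
  assumes "\<And>m n. u m \<noteq> 0 \<Longrightarrow> u n \<noteq> 0 \<Longrightarrow> m = n"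
  shows "summable u" "summable (\<lambda>n. (u n)\<^sup>2)" "(\<Sum>n. u n)\<^sup>2 = (\<Sum>n. (u n)\<^sup>2)"
proof -
  obtain i where "\<And>n. n \<noteq> i \<Longrightarrow> u n = 0"
    using assms by blast
  then have "u = (\<lambda>n. if n = i then u n else 0)" "(\<lambda>n. (u n)\<^sup>2) = (\<lambda>n. if n = i then (u n)\<^sup>2 else 0)"
    by auto
  then have "u sums u i" "(\<lambda>n. (u n)\<^sup>2) sums (u i)\<^sup>2"
    using sums_single[of i u] sums_single[of i "\<lambda>n. (u n)\<^sup>2"] by simp_all
  then show "summable u" "summable (\<lambda>n. (u n)\<^sup>2)" "(\<Sum>n. u n)\<^sup>2 = (\<Sum>n. (u n)\<^sup>2)"
    by (auto simp: sums_iff)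
qed

lemma sums_tail:
  fixes u :: "nat \<Rightarrow> real"
  assumes "summable u"
  shows "(\<lambda>n. if n < N then 0 else u n) sums ((\<Sum>n. u n) - (\<Sum>n<N. u n))"
proof -
  have "(\<lambda>n. u n - (if n \<in> {..<N} then u n else 0)) sums ((\<Sum>n. u n) - (\<Sum>n<N. u n))"
    using sums_diff[OF summable_sums[OF assms] sums_If_finite_set[of "{..<N}" u]] by simp
  moreover have "(\<lambda>n. u n - (if n \<in> {..<N} then u n else 0)) = (\<lambda>n. if n < N then 0 else u n)"
    by auto
  ultimately show ?thesis by simp
qed

definition l2_tail :: "nat \<Rightarrow> (nat \<Rightarrow> real) \<Rightarrow> nat \<Rightarrow> real" where
  "l2_tail N f n = (if n < N then 0 else f n)"

lemma
  assumes "f \<in> l2"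
  shows l2_tail_mem: "l2_tail N f \<in> l2"
    and sums_l2_tail_squared: "(\<lambda>n. (l2_tail N f n)\<^sup>2) sums ((\<Sum>n. (f n)\<^sup>2) - (\<Sum>n<N. (f n)\<^sup>2))"
proof -
  have "(\<lambda>n. (l2_tail N f n)\<^sup>2) = (\<lambda>n. if n < N then 0 else (f n)\<^sup>2)"
    by (auto simp: l2_tail_def)
  then show "(\<lambda>n. (l2_tail N f n)\<^sup>2) sums ((\<Sum>n. (f n)\<^sup>2) - (\<Sum>n<N. (f n)\<^sup>2))"
    using sums_tail assms unfolding l2_def by simp
  then show "l2_tail N f \<in> l2"
    unfolding l2_def by (auto simp: sums_iff)
qed

lemma l2_norm_l2_tail_small:
  assumes f: "f \<in> l2" and e: "e > 0"
  shows "\<exists>N. l2_norm (l2_tail N f) < e"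
proof -
  have "(\<lambda>N. \<Sum>n<N. (f n)\<^sup>2) \<longlonglongrightarrow> (\<Sum>n. (f n)\<^sup>2)"
    using f unfolding l2_def by (simp add: summable_LIMSEQ)
  from LIMSEQ_D[OF this, of "e\<^sup>2"]
  obtain N where N: "\<bar>(\<Sum>n<N. (f n)\<^sup>2) - (\<Sum>n. (f n)\<^sup>2)\<bar> < e\<^sup>2"
    using e by auto
  have "(\<Sum>n. (l2_tail N f n)\<^sup>2) < e\<^sup>2"
    using sums_unique[OF sums_l2_tail_squared[OF f, of N]] N by linarith
  then have "l2_norm (l2_tail N f) < sqrt (e\<^sup>2)"
    unfolding l2_norm_def by (rule real_sqrt_less_mono)
  then show ?thesis
    using e by auto
qed

section \<open>Embedding l_2\<close>

locale escaping_block_sequence = hereditary_family +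
  fixes Z :: "('a \<Rightarrow> real) set" and z :: "nat \<Rightarrow> 'a \<Rightarrow> real"
    and a :: "nat \<Rightarrow> 'a set" and S :: "nat \<Rightarrow> 'a set"
  assumes subspace: "closed_subspace_XA \<A> Z"
    and escaping: "\<And>n. escaping_block \<A> Z (S n) (block_tolerance n) (z n) (a n)"
    and support_earlier: "\<And>m n. m < n \<Longrightarrow> {\<alpha>. z m \<alpha> \<noteq> 0} \<subseteq> S n"
    and Union_blocks: "\<And>N. (\<Union>n<N. a n) \<in> \<A>"
begin

definition old_part :: "nat \<Rightarrow> 'a \<Rightarrow> real" where
  "old_part n = proj_on (S n) (z n)"

definition new_part :: "nat \<Rightarrow> 'a \<Rightarrow> real" where
  "new_part n = proj_on (- S n) (z n)"

definition embed :: "(nat \<Rightarrow> real) \<Rightarrow> 'a \<Rightarrow> real" where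
  "embed f = (\<lambda>\<alpha>. \<Sum>n. f n * z n \<alpha>)"

definition embed_new :: "(nat \<Rightarrow> real) \<Rightarrow> 'a \<Rightarrow> real" where
  "embed_new f = (\<lambda>\<alpha>. \<Sum>n. f n * new_part n \<alpha>)"

definition embed_old :: "(nat \<Rightarrow> real) \<Rightarrow> 'a \<Rightarrow> real" where
  "embed_old f = (\<lambda>\<alpha>. \<Sum>n. f n * old_part n \<alpha>)"

lemma z_mem: "z n \<in> Z"
  using escaping[of n] by (simp add: escaping_block_def)

lemma normA_z: "normA \<A> (z n) = 1"
  using escaping[of n] by (simp add: escaping_block_def)

lemma normA_finite_z: "normA_finite \<A> (z n)"
  using z_mem closed_subspace_XA_subset[OF subspace] normA_finite_XA by blast

lemma z_eq_new_part_plus_old_part: "z n \<alpha> = new_part n \<alpha> + old_part n \<alpha>"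
  by (simp add: new_part_def old_part_def proj_on_def)

lemma new_part_nonzero_unique:
  assumes "new_part n \<alpha> \<noteq> 0" "new_part m \<alpha> \<noteq> 0"
  shows "n = m"
proof (rule ccontr)
  have *: False if "new_part i \<alpha> \<noteq> 0" "new_part j \<alpha> \<noteq> 0" "i < j" for i j
    using that support_earlier[OF that(3)] by (auto simp: new_part_def proj_on_def split: if_splits)
  assume "n \<noteq> m"
  then show False
    using *[OF assms] *[OF assms(2,1)] by (cases "n < m") auto
qed

lemma normA_new_part_le: "normA \<A> (new_part n) \<le> 1"
  using normA_proj_on_le[OF normA_finite_z] normA_z by (simp add: new_part_def)

lemma normA_old_part_le: "normA \<A> (old_part n) \<le> block_tolerance n"
  using escaping[of n] by (simp add: escaping_block_def old_part_def)

lemma abs_old_part_le: "\<bar>old_part n \<alpha>\<bar> \<le> block_tolerance n"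
  using abs_le_normA[OF normA_finite_proj_on[OF normA_finite_z]] normA_old_part_le
  unfolding old_part_def by (meson order_trans)

lemma summable_old_part_squared: "summable (\<lambda>n. (old_part n \<alpha>)\<^sup>2)"
proof (rule summable_comparison_test)
  have "(old_part n \<alpha>)\<^sup>2 \<le> (block_tolerance n)\<^sup>2" for n
    using power_mono[OF abs_old_part_le[of n \<alpha>], of 2] by simp
  then show "\<exists>N. \<forall>n\<ge>N. norm ((old_part n \<alpha>)\<^sup>2) \<le> (block_tolerance n)\<^sup>2"
    by simp
  show "summable (\<lambda>n. (block_tolerance n)\<^sup>2)"
    using sums_block_tolerance_squared by (rule sums_summable)
qed

lemma
  shows summable_embed_new: "summable (\<lambda>n. f n * new_part n \<alpha>)"
    and embed_new_squared: "(embed_new f \<alpha>)\<^sup>2 = (\<Sum>n. (f n * new_part n \<alpha>)\<^sup>2)"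
    and summable_embed_new_squared: "summable (\<lambda>n. (f n * new_part n \<alpha>)\<^sup>2)"
proof -
  have "m = n" if "f m * new_part m \<alpha> \<noteq> 0" "f n * new_part n \<alpha> \<noteq> 0" for m n
    using new_part_nonzero_unique[of m \<alpha> n] that by simp
  from at_most_one_nonzero_sums[of "\<lambda>n. f n * new_part n \<alpha>", OF this]
  show "summable (\<lambda>n. f n * new_part n \<alpha>)"
    and "(embed_new f \<alpha>)\<^sup>2 = (\<Sum>n. (f n * new_part n \<alpha>)\<^sup>2)"
    and "summable (\<lambda>n. (f n * new_part n \<alpha>)\<^sup>2)"
    unfolding embed_new_def by auto
qed

lemma summable_embed_old: "f \<in> l2 \<Longrightarrow> summable (\<lambda>n. f n * old_part n \<alpha>)"
  unfolding l2_def by (intro summable_mult_if_summable_squares summable_old_part_squared) simp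

lemma summable_embed: "f \<in> l2 \<Longrightarrow> summable (\<lambda>n. f n * z n \<alpha>)"
  using summable_add[OF summable_embed_new summable_embed_old]
  by (simp add: z_eq_new_part_plus_old_part distrib_left)

lemma embed_eq_new_plus_old: "f \<in> l2 \<Longrightarrow> embed f \<alpha> = embed_new f \<alpha> + embed_old f \<alpha>"
  unfolding embed_def embed_new_def embed_old_def
  using suminf_add[OF summable_embed_new summable_embed_old]
  by (simp add: z_eq_new_part_plus_old_part distrib_left)

lemma embed_new_on_block:
  assumes "\<alpha> \<in> a n"
  shows "embed_new f \<alpha> = f n * z n \<alpha>"
proof -
  have new: "new_part n \<alpha> = z n \<alpha>" "z n \<alpha> \<noteq> 0"
    using escaping[of n] assms by (auto simp: escaping_block_def new_part_def proj_on_def)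
  then have "f m * new_part m \<alpha> = 0" if "m \<noteq> n" for m
    using new_part_nonzero_unique[of n \<alpha> m] that by auto
  then have "embed_new f \<alpha> = f n * new_part n \<alpha>"
    unfolding embed_new_def by (subst suminf_finite[of "{n}"]) auto
  with new show ?thesis by simp
qed

lemma sum_squares_embed_new_le:
  assumes b: "b \<in> \<A>" and f: "f \<in> l2"
  shows "(\<Sum>\<alpha>\<in>b. (embed_new f \<alpha>)\<^sup>2) \<le> (\<Sum>n. (f n)\<^sup>2)"
proof -
  have fs: "summable (\<lambda>n. (f n)\<^sup>2)"
    using f by (simp add: l2_def)
  have new_le: "(\<Sum>\<alpha>\<in>b. (new_part n \<alpha>)\<^sup>2) \<le> 1" for n
  proof -
    have new_fin: "normA_finite \<A> (new_part n)"
      unfolding new_part_def by (rule normA_finite_proj_on[OF normA_finite_z])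
    have "(\<Sum>\<alpha>\<in>b. (new_part n \<alpha>)\<^sup>2) \<le> (normA \<A> (new_part n))\<^sup>2"
      using sum_squares_le_normA_squared[OF new_fin b] .
    also have "\<dots> \<le> 1"
      using normA_new_part_le normA_nonneg[OF new_fin nonempty] by (simp add: power_le_one)
    finally show ?thesis .
  qed
  have "(\<Sum>\<alpha>\<in>b. (embed_new f \<alpha>)\<^sup>2) = (\<Sum>\<alpha>\<in>b. \<Sum>n. (f n * new_part n \<alpha>)\<^sup>2)"
    by (simp add: embed_new_squared)
  also have "\<dots> = (\<Sum>n. \<Sum>\<alpha>\<in>b. (f n * new_part n \<alpha>)\<^sup>2)"
    by (rule suminf_sum[symmetric]) (rule summable_embed_new_squared)
  also have "\<dots> = (\<Sum>n. (f n)\<^sup>2 * (\<Sum>\<alpha>\<in>b. (new_part n \<alpha>)\<^sup>2))"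
    by (simp add: power_mult_distrib sum_distrib_left)
  also have "\<dots> \<le> (\<Sum>n. (f n)\<^sup>2)"
  proof (rule suminf_le)
    show "(f n)\<^sup>2 * (\<Sum>\<alpha>\<in>b. (new_part n \<alpha>)\<^sup>2) \<le> (f n)\<^sup>2" for n
      using new_le[of n] by (simp add: mult_left_le)
    show "summable (\<lambda>n. (f n)\<^sup>2 * (\<Sum>\<alpha>\<in>b. (new_part n \<alpha>)\<^sup>2))"
      using new_le by (intro summable_comparison_test[OF _ fs])
        (auto intro!: exI[of _ 0] simp: abs_mult mult_left_le sum_nonneg)
  qed (rule fs)
  finally show ?thesis .
qed

lemma sum_squares_embed_old_le:
  assumes b: "b \<in> \<A>" and f: "f \<in> l2"
  shows "(\<Sum>\<alpha>\<in>b. (embed_old f \<alpha>)\<^sup>2) \<le> (\<Sum>n. (f n)\<^sup>2) / 48"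
proof -
  define F where "F = (\<Sum>n. (f n)\<^sup>2)"
  have fs: "summable (\<lambda>n. (f n)\<^sup>2)"
    using f by (simp add: l2_def)
  have F: "0 \<le> F"
    unfolding F_def using fs by (simp add: suminf_nonneg)
  have old_le: "(\<Sum>\<alpha>\<in>b. (old_part n \<alpha>)\<^sup>2) \<le> (block_tolerance n)\<^sup>2" for n
  proof -
    have old_fin: "normA_finite \<A> (old_part n)"
      unfolding old_part_def by (rule normA_finite_proj_on[OF normA_finite_z])
    have "(\<Sum>\<alpha>\<in>b. (old_part n \<alpha>)\<^sup>2) \<le> (normA \<A> (old_part n))\<^sup>2"
      using sum_squares_le_normA_squared[OF old_fin b] .
    also have "\<dots> \<le> (block_tolerance n)\<^sup>2"
      using normA_old_part_le normA_nonneg[OF old_fin nonempty] by (intro power_mono)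
    finally show ?thesis .
  qed
  have "(\<Sum>\<alpha>\<in>b. (embed_old f \<alpha>)\<^sup>2) \<le> (\<Sum>\<alpha>\<in>b. F * (\<Sum>n. (old_part n \<alpha>)\<^sup>2))"
    unfolding embed_old_def F_def
    by (intro sum_mono suminf_mult_squared_le fs summable_old_part_squared)
  also have "\<dots> = F * (\<Sum>n. \<Sum>\<alpha>\<in>b. (old_part n \<alpha>)\<^sup>2)"
    by (simp add: suminf_sum summable_old_part_squared flip: sum_distrib_left)
  also have "\<dots> \<le> F * (\<Sum>n. (block_tolerance n)\<^sup>2)"
    using old_le sums_block_tolerance_squared
    by (intro mult_left_mono F suminf_le summable_sum summable_old_part_squared)
      (auto simp: sums_iff)
  also have "\<dots> = F / 48"
    by (simp add: sums_unique[OF sums_block_tolerance_squared, symmetric])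
  finally show ?thesis
    by (simp add: F_def)
qed

lemma sum_squares_embed_le:
  assumes b: "b \<in> \<A>" and f: "f \<in> l2"
  shows "(\<Sum>\<alpha>\<in>b. (embed f \<alpha>)\<^sup>2) \<le> 4 * (\<Sum>n. (f n)\<^sup>2)"
proof -
  have "0 \<le> (\<Sum>n. (f n)\<^sup>2)"
    using f by (simp add: l2_def suminf_nonneg)
  have "(embed f \<alpha>)\<^sup>2 \<le> 2 * (embed_new f \<alpha>)\<^sup>2 + 2 * (embed_old f \<alpha>)\<^sup>2" for \<alpha>
    using sum_squares_bound[of "embed_new f \<alpha>" "embed_old f \<alpha>"]
    by (simp add: embed_eq_new_plus_old[OF f] power2_sum)
  then have "(\<Sum>\<alpha>\<in>b. (embed f \<alpha>)\<^sup>2) \<le> (\<Sum>\<alpha>\<in>b. 2 * (embed_new f \<alpha>)\<^sup>2 + 2 * (embed_old f \<alpha>)\<^sup>2)"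
    by (rule sum_mono)
  also have "\<dots> = 2 * (\<Sum>\<alpha>\<in>b. (embed_new f \<alpha>)\<^sup>2) + 2 * (\<Sum>\<alpha>\<in>b. (embed_old f \<alpha>)\<^sup>2)"
    by (simp add: sum.distrib sum_distrib_left)
  also have "\<dots> \<le> 4 * (\<Sum>n. (f n)\<^sup>2)"
    using sum_squares_embed_new_le[OF b f] sum_squares_embed_old_le[OF b f]
      \<open>0 \<le> (\<Sum>n. (f n)\<^sup>2)\<close> by linarith
  finally show ?thesis .
qed

lemma
  assumes f: "f \<in> l2"
  shows normA_embed_le: "normA \<A> (embed f) \<le> 2 * l2_norm f"
    and normA_finite_embed: "normA_finite \<A> (embed f)"
proof -
  have "L2_set (embed f) b \<le> 2 * l2_norm f" if b: "b \<in> \<A>" for b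
  proof -
    have "L2_set (embed f) b \<le> sqrt (4 * (\<Sum>n. (f n)\<^sup>2))"
      unfolding L2_set_def using sum_squares_embed_le[OF b f] by (rule real_sqrt_le_mono)
    then show ?thesis
      by (simp add: l2_norm_def real_sqrt_mult)
  qed
  then show "normA \<A> (embed f) \<le> 2 * l2_norm f" "normA_finite \<A> (embed f)"
    using nonempty by (auto intro: normA_le normA_finiteI)
qed

lemma blocks_disjoint: "m \<noteq> n \<Longrightarrow> a m \<inter> a n = {}"
  using escaping_block_disjoint_earlier[OF escaping escaping support_earlier]
  by (metis Int_commute linorder_neqE_nat)

lemma sum_squares_embed_new_ge:
  "(\<Sum>n<N. (f n)\<^sup>2) / 4 \<le> (\<Sum>\<alpha>\<in>(\<Union>n<N. a n). (embed_new f \<alpha>)\<^sup>2)"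
proof -
  have a_fin: "finite (a n)" for n
    using escaping[of n] finite_member by (simp add: escaping_block_def)
  have "(\<Sum>n<N. (f n)\<^sup>2) / 4 = (\<Sum>n<N. (f n)\<^sup>2 * (1 / 4))"
    by (simp add: sum_divide_distrib)
  also have "\<dots> \<le> (\<Sum>n<N. (f n)\<^sup>2 * (\<Sum>\<alpha>\<in>a n. (z n \<alpha>)\<^sup>2))"
    using escaping by (intro sum_mono mult_left_mono) (auto simp: escaping_block_def)
  also have "\<dots> = (\<Sum>n<N. \<Sum>\<alpha>\<in>a n. (embed_new f \<alpha>)\<^sup>2)"
    by (intro sum.cong refl) (simp add: embed_new_on_block power_mult_distrib sum_distrib_left)
  also have "\<dots> = (\<Sum>\<alpha>\<in>(\<Union>n<N. a n). (embed_new f \<alpha>)\<^sup>2)"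
    by (rule sum.UNION_disjoint[symmetric]) (auto simp: a_fin blocks_disjoint)
  finally show ?thesis .
qed

lemma normA_embed_ge:
  assumes f: "f \<in> l2"
  shows "l2_norm f / 4 \<le> normA \<A> (embed f)"
proof -
  define F where "F = (\<Sum>n. (f n)\<^sup>2)"
  have fs: "summable (\<lambda>n. (f n)\<^sup>2)"
    using f by (simp add: l2_def)
  have F: "0 \<le> F"
    unfolding F_def using fs by (simp add: suminf_nonneg)
  have N: "0 \<le> normA \<A> (embed f)"
    using normA_nonneg[OF normA_finite_embed[OF f] nonempty] .
  have partial: "(\<Sum>n<N. (f n)\<^sup>2) / 8 - F / 48 \<le> (normA \<A> (embed f))\<^sup>2" for N
  proof -
    let ?b = "\<Union>n<N. a n"
    have "(embed_new f \<alpha>)\<^sup>2 / 2 - (embed_old f \<alpha>)\<^sup>2 \<le> (embed f \<alpha>)\<^sup>2" for \<alpha>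
      using sum_squares_bound[of "embed_new f \<alpha>" "- 2 * embed_old f \<alpha>"]
      by (simp add: embed_eq_new_plus_old[OF f] power2_eq_square algebra_simps)
    then have "(\<Sum>\<alpha>\<in>?b. (embed_new f \<alpha>)\<^sup>2) / 2 - (\<Sum>\<alpha>\<in>?b. (embed_old f \<alpha>)\<^sup>2)
        \<le> (\<Sum>\<alpha>\<in>?b. (embed f \<alpha>)\<^sup>2)"
      using sum_mono[of ?b "\<lambda>\<alpha>. (embed_new f \<alpha>)\<^sup>2 / 2 - (embed_old f \<alpha>)\<^sup>2"]
      by (simp add: sum_subtractf sum_divide_distrib)
    also have "\<dots> \<le> (normA \<A> (embed f))\<^sup>2"
      by (rule sum_squares_le_normA_squared[OF normA_finite_embed[OF f] Union_blocks])
    finally show ?thesis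
      using sum_squares_embed_new_ge[of f N] sum_squares_embed_old_le[OF Union_blocks[of N] f]
      unfolding F_def by linarith
  qed
  have "(\<lambda>N. (\<Sum>n<N. (f n)\<^sup>2) / 8 - F / 48) \<longlonglongrightarrow> F / 8 - F / 48"
    unfolding F_def by (intro tendsto_intros summable_LIMSEQ fs) auto
  then have "F / 8 - F / 48 \<le> (normA \<A> (embed f))\<^sup>2"
    by (rule LIMSEQ_le_const2) (use partial in blast)
  then have "(l2_norm f / 4)\<^sup>2 \<le> (normA \<A> (embed f))\<^sup>2"
    using F by (simp add: l2_norm_def F_def power_divide)
  then show ?thesis
    using N by (rule power2_le_imp_le)
qed

lemma embed_add: "f \<in> l2 \<Longrightarrow> g \<in> l2 \<Longrightarrow> embed (\<lambda>n. f n + g n) = (\<lambda>\<alpha>. embed f \<alpha> + embed g \<alpha>)"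
  unfolding embed_def by (simp add: distrib_right suminf_add[OF summable_embed summable_embed])

lemma embed_scale: "f \<in> l2 \<Longrightarrow> embed (\<lambda>n. r * f n) = (\<lambda>\<alpha>. r * embed f \<alpha>)"
  unfolding embed_def by (simp add: mult.assoc suminf_mult[OF summable_embed])

lemma embed_minus_partial_sum:
  assumes f: "f \<in> l2"
  shows "(\<lambda>\<alpha>. embed f \<alpha> - (\<Sum>n<N. f n * z n \<alpha>)) = embed (l2_tail N f)"
proof
  fix \<alpha>
  have "(\<lambda>n. l2_tail N f n * z n \<alpha>) = (\<lambda>n. if n < N then 0 else f n * z n \<alpha>)"
    by (auto simp: l2_tail_def)
  then have "(\<lambda>n. l2_tail N f n * z n \<alpha>) sums (embed f \<alpha> - (\<Sum>n<N. f n * z n \<alpha>))"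
    using sums_tail[OF summable_embed[OF f]] by (simp add: embed_def)
  then show "embed f \<alpha> - (\<Sum>n<N. f n * z n \<alpha>) = embed (l2_tail N f) \<alpha>"
    by (simp add: embed_def sums_iff)
qed

lemma embed_mem:
  assumes f: "f \<in> l2"
  shows "embed f \<in> Z"
proof (rule closed_subspace_XA_approx_mem[OF subspace nonempty normA_finite_embed[OF f]])
  fix e :: real
  assume "e > 0"
  then obtain N where N: "l2_norm (l2_tail N f) < e / 2"
    using l2_norm_l2_tail_small[OF f, of "e / 2"] by auto
  have "normA \<A> (\<lambda>\<alpha>. embed f \<alpha> - (\<Sum>n<N. f n * z n \<alpha>)) \<le> 2 * l2_norm (l2_tail N f)"
    unfolding embed_minus_partial_sum[OF f] by (rule normA_embed_le[OF l2_tail_mem[OF f]])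
  also have "\<dots> < e"
    using N by simp
  finally have "normA \<A> (\<lambda>\<alpha>. embed f \<alpha> - (\<Sum>n<N. f n * z n \<alpha>)) < e" .
  moreover have "(\<lambda>\<alpha>. \<Sum>n<N. f n * z n \<alpha>) \<in> Z"
    by (rule closed_subspace_XA_partial_sum[OF subspace z_mem])
  ultimately show "\<exists>y\<in>Z. normA \<A> (\<lambda>\<alpha>. embed f \<alpha> - y \<alpha>) < e"
    by (intro bexI[of _ "\<lambda>\<alpha>. \<Sum>n<N. f n * z n \<alpha>"])
qed

theorem contains_l2: "contains_l2 \<A> Z"
proof -
  have "\<forall>f\<in>l2. 1 / 4 * l2_norm f \<le> normA \<A> (embed f) \<and> normA \<A> (embed f) \<le> 2 * l2_norm f"
    using normA_embed_ge normA_embed_le by auto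
  then show ?thesis
    unfolding contains_l2_def using embed_mem embed_add embed_scale
    by (intro exI[of _ embed] exI[of _ "1 / 4"] exI[of _ 2]) auto
qed

end

theorem proposition4p4:
  fixes c :: "'a::wellorder set \<Rightarrow> 'i::zero_neq_one \<times> 'j"
    and I :: "'i set" and J :: "'j set"
    and Z :: "('a \<Rightarrow> real) set"
  assumes "is_omega1 TYPE('a)"
    and "strong_T_coloring c I J"
    and "closed_subspace_XA (T0_family c) Z"
    and "\<not> separable_XA (T0_family c) Z"
  shows "contains_l2 (T0_family c) Z"
proof -
  obtain z :: "'a \<Rightarrow> nat \<Rightarrow> 'a \<Rightarrow> real" and a :: "'a \<Rightarrow> nat \<Rightarrow> 'a set" and S :: "'a \<Rightarrow> 'a set"
    where blocks: "\<And>\<xi> k. escaping_block (T0_family c) Z (S \<xi>) (block_tolerance k) (z \<xi> k) (a \<xi> k)"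
      and earlier: "\<And>\<eta> \<xi> k. \<eta> < \<xi> \<Longrightarrow> {\<alpha>. z \<eta> k \<alpha> \<noteq> 0} \<subseteq> S \<xi>"
    using hereditary_family.exists_transfinite_escaping_blocks[OF hereditary_family_T0_family
        omega1_countable_initial[OF assms(1)] assms(3,4)]
    by blast
  have "a \<xi> k \<in> T0_family c" "a \<xi> k \<noteq> {}" for \<xi> k
    using blocks[of \<xi> k] by (simp_all add: escaping_block_def)
  moreover have "a \<xi> k \<inter> a \<eta> l = {}" if "\<xi> \<noteq> \<eta>" for \<xi> \<eta> k l
    using escaping_blocks_disjoint[OF blocks earlier that] .
  ultimately obtain s where s: "strict_mono s" "\<And>N. (\<Union>n<N. a (s n) n) \<in> T0_family c"
    using exists_increasing_T0_union[where a = a, OF assms(1,2)] by blast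
  have "escaping_block_sequence (T0_family c) Z (\<lambda>n. z (s n) n) (\<lambda>n. a (s n) n) (\<lambda>n. S (s n))"
  proof (intro escaping_block_sequence.intro escaping_block_sequence_axioms.intro)
    show "{\<alpha>. z (s m) m \<alpha> \<noteq> 0} \<subseteq> S (s n)" if "m < n" for m n
      using earlier strict_monoD[OF s(1) that] by blast
  qed (use hereditary_family_T0_family assms(3) blocks s(2) in auto)
  then show ?thesis
    by (rule escaping_block_sequence.contains_l2)
qed

end
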